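(* In any Poisson $H$-pseudoalgebra $V$ the right Leibniz rule holds: $[ab*c]=a[b*c]+(-1)^{p(a)p(b)}b[a*c]$ for all $a,b,c\in V$.
   Context: $H$ is a cocommutative Hopf algebra over a field $\mathbb F$ of characteristic $0$ (purely even), coproduct $\Delta(h)=h_{(1)}\otimes h_{(2)}$, antipode $S$, $h_{(1)}\otimes h_{(-2)}:=(\mathrm{id}\otimes S)\Delta(h)$, iterated coproduct $h_{(1)}\otimes h_{(2)}\otimes h_{(3)}$. $H^{\otimes r}$ is a right $H$-module via $(h_1\otimes\dots\otimes h_r)h=h_1h_{(1)}\otimes\dots\otimes h_rh_{(r)}$ and $H^{\otimes r}\otimes_H L$ the corresponding tensor product. A Lie $H$-pseudoalgebra is a vector superspace $L$ (parity $p$) with a left $H$-module structure and an even linear map $L\otimes L\to(H\otimes H)\otimes_HL$, $a\otimes b\mapsto[a*b]$, such that for $a,b,c\in L$, $f,g\in H$, $\sigma=(12)$: $[fa*gb]=((f\otimes g)\otimes_H1)[a*b]$; $[b*a]=-(-1)^{p(a)p(b)}(\sigma\otimes_H\mathrm{id})[a*b]$; and $[a*[b*c]]-(-1)^{p(a)p(b)}((\sigma\otimes\mathrm{id})\otimes_H\mathrm{id})[b*[a*c]]=[[a*b]*c]$ in $H^{\otimes3}\otimes_HL$, where, if $[a*b]=\sum_i(f_i\otimes g_i)\otimes_He_i$ and $[e_i*c]=\sum_j(f_{ij}\otimes g_{ij})\otimes_He_{ij}$, then $[[a*b]*c]=\sum_{i,j}(f_if_{ij(1)}\otimes g_if_{ij(2)}\otimes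 g_{ij})\otimes_He_{ij}$, and if $[b*c]=\sum_i(h_i\otimes l_i)\otimes_Hd_i$, $[a*d_i]=\sum_j(h_{ij}\otimes l_{ij})\otimes_Hd_{ij}$, then $[a*[b*c]]=\sum_{i,j}(h_{ij}\otimes h_il_{ij(1)}\otimes l_il_{ij(2)})\otimes_Hd_{ij}$. A Poisson $H$-pseudoalgebra is a Lie $H$-pseudoalgebra $V$ with an even supercommutative associative product $V\otimes V\to V$ such that $h(ab)=(h_{(1)}a)(h_{(2)}b)$ and $[a*bc]=[a*b]c+(-1)^{p(b)p(c)}[a*c]b$, where for $[a*b]=\sum_i(f_i\otimes g_i)\otimes_He_i$ one sets $[a*b]c:=\sum_i(f_i\otimes g_{i(1)})\otimes_He_i(g_{i(-2)}c)$ (well defined). Similarly, for $[b*c]=\sum_i(h_i\otimes l_i)\otimes_Hd_i$, $a[b*c]:=\sum_i(h_{i(1)}\otimes l_i)\otimes_H(h_{i(-2)}a)d_i$. *)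

theory Defs
  imports Main "HOL.Vector_Spaces" "HOL-Library.Function_Algebras"
begin

text \<open>The free F-vector space on a set X is modelled by functions X => F
  (only finitely supported ones occur). A finite list of basic tensors is a
  representative; its image in the free space is the sum of the deltas.\<close>

definition fscale :: "'f::field \<Rightarrow> ('x \<Rightarrow> 'f) \<Rightarrow> ('x \<Rightarrow> 'f)" where
  "fscale c \<phi> = (\<lambda>z. c * \<phi> z)"

definition dlt :: "'x \<Rightarrow> ('x \<Rightarrow> 'f::field)" where
  "dlt x = (\<lambda>y. if y = x then 1 else 0)"

definition fvec :: "'x list \<Rightarrow> ('x \<Rightarrow> 'f::field)" where
  "fvec xs = sum_list (map dlt xs)"

text \<open>Tensor algebra of H over F: multilinearity relations in every slot
  (lists of length n encode elements of the n-th tensor power; the relations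
  are homogeneous in n, so equality is checked degreewise).\<close>

definition tensH_rel :: "('f::field \<Rightarrow> 'h::ab_group_add \<Rightarrow> 'h) \<Rightarrow> ('h list \<Rightarrow> 'f) set" where
  "tensH_rel smH =
     {dlt (xs @ [a + b] @ ys) - dlt (xs @ [a] @ ys) - dlt (xs @ [b] @ ys) | xs a b ys. True}
   \<union> {dlt (xs @ [smH c a] @ ys) - fscale c (dlt (xs @ [a] @ ys)) | xs c a ys. True}"

definition teqH :: "('f::field \<Rightarrow> 'h::ab_group_add \<Rightarrow> 'h) \<Rightarrow> 'h list list \<Rightarrow> 'h list list \<Rightarrow> bool" where
  "teqH smH xs ys \<longleftrightarrow> fvec xs - fvec ys \<in> module.span fscale (tensH_rel smH)"

definition pl :: "('h \<times> 'h) list \<Rightarrow> 'h list list" where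
  "pl xs = map (\<lambda>(a, b). [a, b]) xs"

text \<open>Iterated coproduct  h |-> h_(1) (x) ... (x) h_(r)  (representative),
  computed as (id (x) Delta^(r-1)) Delta.\<close>
fun coprod_iter :: "('h \<Rightarrow> ('h \<times> 'h) list) \<Rightarrow> nat \<Rightarrow> 'h \<Rightarrow> 'h list list" where
  "coprod_iter D 0 h = []"
| "coprod_iter D (Suc 0) h = [[h]]"
| "coprod_iter D (Suc (Suc k)) h =
     concat (map (\<lambda>(x, y). map (Cons x) (coprod_iter D (Suc k) y)) (D h))"

text \<open>Relations defining  H^{(x) r} (x)_H V : multilinearity over F and the
  balancing relation  (fs h) (x)_H e = fs (x)_H (h e)  for the right H-module
  structure  (h_1 (x)..(x) h_r) h = h_1 h_(1) (x) ... (x) h_r h_(r).\<close>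

definition tensV_rel ::
  "('f::field \<Rightarrow> 'h::ring_1 \<Rightarrow> 'h) \<Rightarrow> ('f \<Rightarrow> 'v::ab_group_add \<Rightarrow> 'v) \<Rightarrow>
   ('h \<Rightarrow> ('h \<times> 'h) list) \<Rightarrow> ('h \<Rightarrow> 'v \<Rightarrow> 'v) \<Rightarrow> ('h list \<times> 'v \<Rightarrow> 'f) set" where
  "tensV_rel smH smV D act =
     {dlt (xs @ [a + b] @ ys, e) - dlt (xs @ [a] @ ys, e) - dlt (xs @ [b] @ ys, e) | xs a b ys e. True}
   \<union> {dlt (xs @ [smH c a] @ ys, e) - fscale c (dlt (xs @ [a] @ ys, e)) | xs c a ys e. True}
   \<union> {dlt (fs, e + e') - dlt (fs, e) - dlt (fs, e') | fs e e'. True}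
   \<union> {dlt (fs, smV c e) - fscale c (dlt (fs, e)) | fs c e. True}
   \<union> {fvec (map (\<lambda>hs. (map2 (*) fs hs, e)) (coprod_iter D (length fs) h)) - dlt (fs, act h e)
       | fs h e. fs \<noteq> []}"

definition teqV ::
  "('f::field \<Rightarrow> 'h::ring_1 \<Rightarrow> 'h) \<Rightarrow> ('f \<Rightarrow> 'v::ab_group_add \<Rightarrow> 'v) \<Rightarrow>
   ('h \<Rightarrow> ('h \<times> 'h) list) \<Rightarrow> ('h \<Rightarrow> 'v \<Rightarrow> 'v) \<Rightarrow>
   ('h list \<times> 'v) list \<Rightarrow> ('h list \<times> 'v) list \<Rightarrow> bool" where
  "teqV smH smV D act xs ys \<longleftrightarrow>
     fvec xs - fvec ys \<in> module.span fscale (tensV_rel smH smV D act)"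

definition cocomm_hopf ::
  "('f::field_char_0 \<Rightarrow> 'h::ring_1 \<Rightarrow> 'h) \<Rightarrow> ('h \<Rightarrow> ('h \<times> 'h) list) \<Rightarrow> ('h \<Rightarrow> 'f) \<Rightarrow> ('h \<Rightarrow> 'h) \<Rightarrow> bool" where
  "cocomm_hopf smH D eps S \<longleftrightarrow>
     vector_space smH
   \<and> (\<forall>c x y. smH c (x * y) = smH c x * y \<and> smH c (x * y) = x * smH c y)
   \<comment> \<open>coproduct: linear algebra map H -> H (x) H\<close>
   \<and> (\<forall>x y. teqH smH (pl (D (x + y))) (pl (D x @ D y)))
   \<and> (\<forall>c x. teqH smH (pl (D (smH c x))) (pl (map (\<lambda>(a, b). (smH c a, b)) (D x))))
   \<and> (\<forall>x y. teqH smH (pl (D (x * y))) [[a * c, b * d]. (a, b) \<leftarrow> D x, (c, d) \<leftarrow> D y])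
   \<and> teqH smH (pl (D 1)) [[1, 1]]
   \<comment> \<open>coassociativity\<close>
   \<and> (\<forall>x. teqH smH [[a, b1, b2]. (a, b) \<leftarrow> D x, (b1, b2) \<leftarrow> D b]
                     [[a1, a2, b]. (a, b) \<leftarrow> D x, (a1, a2) \<leftarrow> D a])
   \<comment> \<open>counit: algebra map H -> F\<close>
   \<and> Vector_Spaces.linear smH (*) eps
   \<and> (\<forall>x y. eps (x * y) = eps x * eps y) \<and> eps 1 = 1
   \<and> (\<forall>x. sum_list [smH (eps a) b. (a, b) \<leftarrow> D x] = x \<and> sum_list [smH (eps b) a. (a, b) \<leftarrow> D x] = x)
   \<comment> \<open>antipode\<close>
   \<and> Vector_Spaces.linear smH smH S
   \<and> (\<forall>x. sum_list [S a * b. (a, b) \<leftarrow> D x] = smH (eps x) 1 \<and> sum_list [a * S b. (a, b) \<leftarrow> D x] = smH (eps x) 1)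
   \<comment> \<open>cocommutativity\<close>
   \<and> (\<forall>x. teqH smH (pl (D x)) (pl (map (\<lambda>(a, b). (b, a)) (D x))))"

text \<open>Homogeneous component of parity p (False = even, True = odd).\<close>
definition Vp :: "'v set \<Rightarrow> 'v set \<Rightarrow> bool \<Rightarrow> 'v set" where
  "Vp V0 V1 p = (if p then V1 else V0)"

definition sgn_pp :: "bool \<Rightarrow> bool \<Rightarrow> 'f::field" where
  "sgn_pp p q = (if p \<and> q then -1 else 1)"

definition superspace :: "('f::field \<Rightarrow> 'v::ab_group_add \<Rightarrow> 'v) \<Rightarrow> 'v set \<Rightarrow> 'v set \<Rightarrow> bool" where
  "superspace smV V0 V1 \<longleftrightarrow> vector_space smV \<and> module.subspace smV V0 \<and> module.subspace smV V1
     \<and> V0 \<inter> V1 = {0} \<and> (\<forall>v. \<exists>x\<in>V0. \<exists>y\<in>V1. v = x + y)"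

text \<open>Left H-module structure on the superspace V (H purely even, so the action preserves parity).\<close>
definition Hmodule ::
  "('f::field \<Rightarrow> 'h::ring_1 \<Rightarrow> 'h) \<Rightarrow> ('f \<Rightarrow> 'v::ab_group_add \<Rightarrow> 'v) \<Rightarrow> 'v set \<Rightarrow> 'v set \<Rightarrow>
   ('h \<Rightarrow> 'v \<Rightarrow> 'v) \<Rightarrow> bool" where
  "Hmodule smH smV V0 V1 act \<longleftrightarrow>
     (\<forall>x y v. act (x + y) v = act x v + act y v)
   \<and> (\<forall>x v w. act x (v + w) = act x v + act x w)
   \<and> (\<forall>c x v. act (smH c x) v = smV c (act x v))
   \<and> (\<forall>c x v. act x (smV c v) = smV c (act x v))
   \<and> (\<forall>x y v. act (x * y) v = act x (act y v))
   \<and> (\<forall>v. act 1 v = v)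
   \<and> (\<forall>x. act x ` V0 \<subseteq> V0 \<and> act x ` V1 \<subseteq> V1)"

definition scT :: "('f \<Rightarrow> 'v \<Rightarrow> 'v) \<Rightarrow> 'f \<Rightarrow> ('h list \<times> 'v) list \<Rightarrow> ('h list \<times> 'v) list" where
  "scT smV c xs = map (\<lambda>(fs, e). (fs, smV c e)) xs"

text \<open>[[a*b]*c]\<close>
definition brL ::
  "('h::ring_1 \<Rightarrow> ('h \<times> 'h) list) \<Rightarrow> ('v \<Rightarrow> 'v \<Rightarrow> ('h list \<times> 'v) list) \<Rightarrow> 'v \<Rightarrow> 'v \<Rightarrow> 'v \<Rightarrow> ('h list \<times> 'v) list" where
  "brL D br a b c =
     [([fs ! 0 * x, fs ! 1 * y, gs ! 1], d). (fs, e) \<leftarrow> br a b, (gs, d) \<leftarrow> br e c, (x, y) \<leftarrow> D (gs ! 0)]"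

text \<open>[a*[b*c]]\<close>
definition brR ::
  "('h::ring_1 \<Rightarrow> ('h \<times> 'h) list) \<Rightarrow> ('v \<Rightarrow> 'v \<Rightarrow> ('h list \<times> 'v) list) \<Rightarrow> 'v \<Rightarrow> 'v \<Rightarrow> 'v \<Rightarrow> ('h list \<times> 'v) list" where
  "brR D br a b c =
     [([ks ! 0, hs ! 0 * x, hs ! 1 * y], d'). (hs, d) \<leftarrow> br b c, (ks, d') \<leftarrow> br a d, (x, y) \<leftarrow> D (ks ! 1)]"

definition swap12 :: "'h list \<times> 'v \<Rightarrow> 'h list \<times> 'v" where
  "swap12 t = ([fst t ! 1, fst t ! 0, fst t ! 2], snd t)"

definition lie_pseudo ::
  "('f::field_char_0 \<Rightarrow> 'h::ring_1 \<Rightarrow> 'h) \<Rightarrow> ('h \<Rightarrow> ('h \<times> 'h) list) \<Rightarrow> ('h \<Rightarrow> 'f) \<Rightarrow> ('h \<Rightarrow> 'h) \<Rightarrow>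
   ('f \<Rightarrow> 'v::ab_group_add \<Rightarrow> 'v) \<Rightarrow> 'v set \<Rightarrow> 'v set \<Rightarrow> ('h \<Rightarrow> 'v \<Rightarrow> 'v) \<Rightarrow>
   ('v \<Rightarrow> 'v \<Rightarrow> ('h list \<times> 'v) list) \<Rightarrow> bool" where
  "lie_pseudo smH D eps S smV V0 V1 act br \<longleftrightarrow>
     cocomm_hopf smH D eps S \<and> superspace smV V0 V1 \<and> Hmodule smH smV V0 V1 act
   \<comment> \<open>the bracket takes values in (H (x) H) (x)_H V\<close>
   \<and> (\<forall>a b. \<forall>(fs, e) \<in> set (br a b). length fs = 2)
   \<comment> \<open>F-bilinearity\<close>
   \<and> (\<forall>a a' b. teqV smH smV D act (br (a + a') b) (br a b @ br a' b))
   \<and> (\<forall>a b b'. teqV smH smV D act (br a (b + b')) (br a b @ br a b'))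
   \<and> (\<forall>c a b. teqV smH smV D act (br (smV c a) b) (scT smV c (br a b)))
   \<and> (\<forall>c a b. teqV smH smV D act (br a (smV c b)) (scT smV c (br a b)))
   \<comment> \<open>the bracket is even\<close>
   \<and> (\<forall>a b pa pb. a \<in> Vp V0 V1 pa \<longrightarrow> b \<in> Vp V0 V1 pb \<longrightarrow>
        (\<exists>ys. teqV smH smV D act (br a b) ys \<and>
              (\<forall>(fs, e) \<in> set ys. length fs = 2 \<and> e \<in> Vp V0 V1 (pa \<noteq> pb))))
   \<comment> \<open>H-sesquilinearity  [fa*gb] = ((f (x) g) (x)_H 1)[a*b]\<close>
   \<and> (\<forall>f g a b. teqV smH smV D act (br (act f a) (act g b))
                    (map (\<lambda>(fs, e). (map2 (*) [f, g] fs, e)) (br a b)))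
   \<comment> \<open>skew-symmetry\<close>
   \<and> (\<forall>a b pa pb. a \<in> Vp V0 V1 pa \<longrightarrow> b \<in> Vp V0 V1 pb \<longrightarrow>
        teqV smH smV D act (br b a) (scT smV (- sgn_pp pa pb) (map (\<lambda>(fs, e). (rev fs, e)) (br a b))))
   \<comment> \<open>Jacobi identity\<close>
   \<and> (\<forall>a b c pa pb pc. a \<in> Vp V0 V1 pa \<longrightarrow> b \<in> Vp V0 V1 pb \<longrightarrow> c \<in> Vp V0 V1 pc \<longrightarrow>
        teqV smH smV D act
          (brR D br a b c @ scT smV (- sgn_pp pa pb) (map swap12 (brR D br b a c)))
          (brL D br a b c))"

text \<open>[a*b]c  and  a[b*c]  (with h_(1) (x) h_(-2) = (id (x) S) Delta h).\<close>
definition rmul ::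
  "('h \<Rightarrow> ('h \<times> 'h) list) \<Rightarrow> ('h \<Rightarrow> 'h) \<Rightarrow> ('h \<Rightarrow> 'v \<Rightarrow> 'v) \<Rightarrow> ('v \<Rightarrow> 'v \<Rightarrow> 'v) \<Rightarrow>
   ('h list \<times> 'v) list \<Rightarrow> 'v \<Rightarrow> ('h list \<times> 'v) list" where
  "rmul D S act mul xs c = [([fs ! 0, x], mul e (act (S y) c)). (fs, e) \<leftarrow> xs, (x, y) \<leftarrow> D (fs ! 1)]"

definition lmul ::
  "('h \<Rightarrow> ('h \<times> 'h) list) \<Rightarrow> ('h \<Rightarrow> 'h) \<Rightarrow> ('h \<Rightarrow> 'v \<Rightarrow> 'v) \<Rightarrow> ('v \<Rightarrow> 'v \<Rightarrow> 'v) \<Rightarrow>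
   'v \<Rightarrow> ('h list \<times> 'v) list \<Rightarrow> ('h list \<times> 'v) list" where
  "lmul D S act mul a xs = [([x, fs ! 1], mul (act (S y) a) d). (fs, d) \<leftarrow> xs, (x, y) \<leftarrow> D (fs ! 0)]"

definition poisson_pseudo ::
  "('f::field_char_0 \<Rightarrow> 'h::ring_1 \<Rightarrow> 'h) \<Rightarrow> ('h \<Rightarrow> ('h \<times> 'h) list) \<Rightarrow> ('h \<Rightarrow> 'f) \<Rightarrow> ('h \<Rightarrow> 'h) \<Rightarrow>
   ('f \<Rightarrow> 'v::ab_group_add \<Rightarrow> 'v) \<Rightarrow> 'v set \<Rightarrow> 'v set \<Rightarrow> ('h \<Rightarrow> 'v \<Rightarrow> 'v) \<Rightarrow>
   ('v \<Rightarrow> 'v \<Rightarrow> ('h list \<times> 'v) list) \<Rightarrow> ('v \<Rightarrow> 'v \<Rightarrow> 'v) \<Rightarrow> bool" where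
  "poisson_pseudo smH D eps S smV V0 V1 act br mul \<longleftrightarrow>
     lie_pseudo smH D eps S smV V0 V1 act br
   \<comment> \<open>F-bilinear, associative, even, supercommutative product\<close>
   \<and> (\<forall>a a' b. mul (a + a') b = mul a b + mul a' b)
   \<and> (\<forall>a b b'. mul a (b + b') = mul a b + mul a b')
   \<and> (\<forall>c a b. mul (smV c a) b = smV c (mul a b) \<and> mul a (smV c b) = smV c (mul a b))
   \<and> (\<forall>a b c. mul (mul a b) c = mul a (mul b c))
   \<and> (\<forall>a b pa pb. a \<in> Vp V0 V1 pa \<longrightarrow> b \<in> Vp V0 V1 pb \<longrightarrow>
        mul a b \<in> Vp V0 V1 (pa \<noteq> pb) \<and> mul a b = smV (sgn_pp pa pb) (mul b a))
   \<comment> \<open>h(ab) = (h_(1) a)(h_(2) b)\<close>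
   \<and> (\<forall>h a b. act h (mul a b) = sum_list [mul (act x a) (act y b). (x, y) \<leftarrow> D h])
   \<comment> \<open>left Leibniz rule\<close>
   \<and> (\<forall>a b c pa pb pc. a \<in> Vp V0 V1 pa \<longrightarrow> b \<in> Vp V0 V1 pb \<longrightarrow> c \<in> Vp V0 V1 pc \<longrightarrow>
        teqV smH smV D act (br a (mul b c))
          (rmul D S act mul (br a b) c @ scT smV (sgn_pp pb pc) (rmul D S act mul (br a c) b)))"

end

(*
  Skew-symmetry gives [ab*c] = -(-1)^(p(c)(p(a)+p(b))) sigma[c*ab], and the
  left Leibniz rule splits [c*ab] into [c*a]b and [c*b]a.  The flip sigma carries [c*a]b to
  b sigma[c*a] up to the sign of the supercommutative product (this uses cocommutativity of H),
  and skew-symmetry turns sigma[c*a] back into a multiple of [a*c].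
  The work lies in showing that the flip, scalar multiplication and left multiplication by an
  element of V are well defined on (H (x) H) (x)_H V, i.e. respect the defining relations of
  the tensor product.  For left multiplication this rests on z(he) = h_(1)((S(h_(2))z)e),
  proved from coassociativity, cocommutativity and the antipode axioms, together with
  anti-multiplicativity of S.
*)
theory Submission
  imports Defs "HOL-Library.Multiset"
begin

lemma length2_split:
  assumes "length (xs @ [a] @ ys) = 2"
  obtains y where "xs = []" "ys = [y]" | x where "xs = [x]" "ys = []"
proof -
  have "length xs + length ys = 1" using assms by simp
  then show thesis using that by (cases xs; cases ys) auto
qed

lemma length3_split:
  assumes "length (xs @ [a] @ ys) = 3"
  obtains y z where "xs = []" "ys = [y, z]" | x z where "xs = [x]" "ys = [z]"
    | x y where "xs = [x, y]" "ys = []"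
proof -
  have "length xs + length ys = 2" using assms by simp
  then show thesis using that by (cases xs; cases ys) (auto simp: length_Suc_conv)
qed

definition app2 :: "('h \<Rightarrow> 'h \<Rightarrow> 'w::zero) \<Rightarrow> 'h list \<Rightarrow> 'w" where
  "app2 F l = (if length l = 2 then F (l ! 0) (l ! 1) else 0)"

definition app3 :: "('h \<Rightarrow> 'h \<Rightarrow> 'h \<Rightarrow> 'w::zero) \<Rightarrow> 'h list \<Rightarrow> 'w" where
  "app3 F l = (if length l = 3 then F (l ! 0) (l ! 1) (l ! 2) else 0)"

lemma sum_list_map_concat: "(\<Sum>x\<leftarrow>concat xss. g x) = (\<Sum>xs\<leftarrow>xss. \<Sum>x\<leftarrow>xs. g x)"
  by (induction xss) simp_all

lemma concat_map_concat: "concat (map g (concat xss)) = concat (map (\<lambda>xs. concat (map g xs)) xss)"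
  by (induction xss) simp_all

lemma sum_list_swap:
  "(\<Sum>i\<leftarrow>A. \<Sum>j\<leftarrow>B. f i j) = (\<Sum>j\<leftarrow>B. \<Sum>i\<leftarrow>A. f i j :: 'a::comm_monoid_add)"
  by (induction A) (simp_all add: sum_list_addf)

lemma sum_list_swap_pairs:
  "(\<Sum>(a1, a2)\<leftarrow>A. \<Sum>(c, d)\<leftarrow>B. G a1 a2 c d) = (\<Sum>(c, d)\<leftarrow>B. \<Sum>(a1, a2)\<leftarrow>A. G a1 a2 c d :: 'a::comm_monoid_add)"
  unfolding case_prod_unfold by (rule sum_list_swap)

section \<open>Linear extension on free vector spaces\<close>

lemma module_fscale: "module (fscale :: 'f::field \<Rightarrow> ('x \<Rightarrow> 'f) \<Rightarrow> ('x \<Rightarrow> 'f))"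
  by unfold_locales (auto simp: fscale_def fun_eq_iff algebra_simps)

lemma fscale_add: "fscale c (v + w) = fscale c v + fscale c w"
  by (simp add: fscale_def fun_eq_iff distrib_left)

lemma fvec_Cons: "fvec (x # xs) = dlt x + fvec xs"
  by (simp add: fvec_def)

lemma fvec_single: "fvec [x] = dlt x"
  by (simp add: fvec_def)

lemma fvec_append: "fvec (xs @ ys) = fvec xs + fvec ys"
  by (simp add: fvec_def)

lemma fvec_Nil: "fvec [] = 0"
  by (simp add: fvec_def)

lemma fvec_concat: "fvec (concat (map \<phi> xs)) = (\<Sum>x\<leftarrow>xs. fvec (\<phi> x))"
  by (induction xs) (simp_all add: fvec_Nil fvec_append)

lemma fvec_mset_cong:
  assumes "mset xs = mset ys"
  shows "fvec xs = fvec ys"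
proof -
  have eq: "fvec zs = sum_mset (image_mset dlt (mset zs))" for zs :: "'a list"
    by (simp only: fvec_def sum_mset_sum_list[symmetric] mset_map)
  show ?thesis
    by (simp only: eq assms)
qed

definition fsupp :: "('x \<Rightarrow> 'f::zero) \<Rightarrow> 'x set" where
  "fsupp v = {x. v x \<noteq> 0}"

definition lin_ext :: "('f::field \<Rightarrow> 'w::ab_group_add \<Rightarrow> 'w) \<Rightarrow> ('x \<Rightarrow> 'w) \<Rightarrow> ('x \<Rightarrow> 'f) \<Rightarrow> 'w" where
  "lin_ext smW g v = (\<Sum>x\<in>fsupp v. smW (v x) (g x))"

lemma fsupp_add: "fsupp (v + w :: 'x \<Rightarrow> 'f::field) \<subseteq> fsupp v \<union> fsupp w"
  by (auto simp: fsupp_def)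

lemma fsupp_diff: "fsupp (v - w :: 'x \<Rightarrow> 'f::field) \<subseteq> fsupp v \<union> fsupp w"
  by (auto simp: fsupp_def)

lemma fsupp_fscale: "fsupp (fscale c v) \<subseteq> fsupp v"
  by (auto simp: fsupp_def fscale_def)

lemma fsupp_dlt: "fsupp (dlt x :: _ \<Rightarrow> 'f::field) = {x}"
  by (auto simp: fsupp_def dlt_def)

lemma fsupp_fvec: "fsupp (fvec xs :: _ \<Rightarrow> 'f::field) \<subseteq> set xs"
proof (induction xs)
  case Nil
  show ?case by (simp add: fvec_def fsupp_def)
next
  case (Cons x xs)
  then show ?case
    using fsupp_add[of "dlt x" "fvec xs"] fsupp_dlt[of x] unfolding fvec_Cons set_simps by blast
qed

lemma finite_fsupp_add [simp]:
  "finite (fsupp v) \<Longrightarrow> finite (fsupp w) \<Longrightarrow> finite (fsupp (v + w :: _ \<Rightarrow> 'f::field))"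
  using finite_subset[OF fsupp_add[of v w]] by simp

lemma finite_fsupp_diff [simp]:
  "finite (fsupp v) \<Longrightarrow> finite (fsupp w) \<Longrightarrow> finite (fsupp (v - w :: _ \<Rightarrow> 'f::field))"
  using finite_subset[OF fsupp_diff[of v w]] by simp

lemma finite_fsupp_fscale [simp]: "finite (fsupp v) \<Longrightarrow> finite (fsupp (fscale c v :: _ \<Rightarrow> 'f::field))"
  using finite_subset[OF fsupp_fscale[of c v]] by simp

lemma finite_fsupp_dlt [simp]: "finite (fsupp (dlt x :: _ \<Rightarrow> 'f::field))"
  by (simp add: fsupp_dlt)

lemma finite_fsupp_fvec [simp]: "finite (fsupp (fvec xs :: _ \<Rightarrow> 'f::field))"
  using finite_subset[OF fsupp_fvec[of xs]] by simp

context
  fixes smW :: "'f::field \<Rightarrow> 'w::ab_group_add \<Rightarrow> 'w"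
  assumes module_W: "module smW"
begin

lemma lin_ext_superset:
  assumes "finite A" "fsupp v \<subseteq> A"
  shows "lin_ext smW g v = (\<Sum>x\<in>A. smW (v x) (g x))"
  unfolding lin_ext_def
  by (rule sum.mono_neutral_left[OF assms]) (auto simp: fsupp_def module.scale_zero_left[OF module_W])

lemma lin_ext_add:
  assumes "finite (fsupp v)" "finite (fsupp w)"
  shows "lin_ext smW g (v + w) = lin_ext smW g v + lin_ext smW g w"
proof -
  let ?A = "fsupp v \<union> fsupp w"
  have "lin_ext smW g (v + w) = (\<Sum>x\<in>?A. smW ((v + w) x) (g x))"
    using assms fsupp_add[of v w] by (intro lin_ext_superset) auto
  also have "\<dots> = (\<Sum>x\<in>?A. smW (v x) (g x)) + (\<Sum>x\<in>?A. smW (w x) (g x))"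
    by (simp add: module.scale_left_distrib[OF module_W] sum.distrib)
  also have "\<dots> = lin_ext smW g v + lin_ext smW g w"
    using assms by (simp add: lin_ext_superset[of ?A])
  finally show ?thesis .
qed

lemma lin_ext_diff:
  assumes "finite (fsupp v)" "finite (fsupp w)"
  shows "lin_ext smW g (v - w) = lin_ext smW g v - lin_ext smW g w"
proof -
  let ?A = "fsupp v \<union> fsupp w"
  have "lin_ext smW g (v - w) = (\<Sum>x\<in>?A. smW ((v - w) x) (g x))"
    using assms fsupp_diff[of v w] by (intro lin_ext_superset) auto
  also have "\<dots> = (\<Sum>x\<in>?A. smW (v x) (g x)) - (\<Sum>x\<in>?A. smW (w x) (g x))"
    by (simp add: module.scale_left_diff_distrib[OF module_W] sum_subtractf)
  also have "\<dots> = lin_ext smW g v - lin_ext smW g w"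
    using assms by (simp add: lin_ext_superset[of ?A])
  finally show ?thesis .
qed

lemma lin_ext_fscale:
  assumes "finite (fsupp v)"
  shows "lin_ext smW g (fscale c v) = smW c (lin_ext smW g v)"
proof -
  have "lin_ext smW g (fscale c v) = (\<Sum>x\<in>fsupp v. smW (fscale c v x) (g x))"
    using assms fsupp_fscale[of c v] by (intro lin_ext_superset) auto
  then show ?thesis
    by (simp add: lin_ext_def fscale_def module.scale_sum_right[OF module_W] module.scale_scale[OF module_W])
qed

lemma lin_ext_dlt: "lin_ext smW g (dlt x :: _ \<Rightarrow> 'f) = g x"
  unfolding lin_ext_def fsupp_dlt by (simp add: dlt_def module.scale_one[OF module_W])

lemma lin_ext_fvec: "lin_ext smW g (fvec xs :: _ \<Rightarrow> 'f) = (\<Sum>x\<leftarrow>xs. g x)"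
proof (induction xs)
  case Nil
  show ?case by (simp add: fvec_def lin_ext_def fsupp_def)
next
  case (Cons x xs)
  have "lin_ext smW g (fvec (x # xs) :: _ \<Rightarrow> 'f) = lin_ext smW g (dlt x :: _ \<Rightarrow> 'f) + lin_ext smW g (fvec xs :: _ \<Rightarrow> 'f)"
    unfolding fvec_Cons by (rule lin_ext_add) simp_all
  then show ?case using Cons by (simp add: lin_ext_dlt)
qed

lemma lin_ext_span_subspace:
  assumes U: "module.subspace smW U"
    and R: "\<And>r. r \<in> R \<Longrightarrow> finite (fsupp r) \<and> lin_ext smW g r \<in> U"
    and v: "v \<in> module.span fscale R"
  shows "finite (fsupp v) \<and> lin_ext smW g v \<in> U"
proof (rule module.span_induct_alt[OF module_fscale v])
  show "finite (fsupp 0) \<and> lin_ext smW g 0 \<in> U"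
    using module.subspace_0[OF module_W U] by (simp add: lin_ext_def fsupp_def)
next
  fix c x y
  assume "x \<in> R" and y: "finite (fsupp y) \<and> lin_ext smW g y \<in> U"
  then have "finite (fsupp x)" "lin_ext smW g x \<in> U"
    using R by auto
  with y show "finite (fsupp (fscale c x + y)) \<and> lin_ext smW g (fscale c x + y) \<in> U"
    using lin_ext_add[where v = "fscale c x" and w = y] lin_ext_fscale[where v = x and c = c]
      module.subspace_add[OF module_W U] module.subspace_scale[OF module_W U]
    by simp
qed

end

section \<open>Cocommutative Hopf algebras\<close>

locale cocomm_hopf_algebra =
  fixes smH :: "'f::field_char_0 \<Rightarrow> 'h::ring_1 \<Rightarrow> 'h"
    and D :: "'h \<Rightarrow> ('h \<times> 'h) list" and eps :: "'h \<Rightarrow> 'f" and S :: "'h \<Rightarrow> 'h"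
  assumes hopf: "cocomm_hopf smH D eps S"
begin

abbreviation teqH_infix :: "'h list list \<Rightarrow> 'h list list \<Rightarrow> bool" (infix "\<approx>\<^sub>H" 50) where
  "X \<approx>\<^sub>H Y \<equiv> teqH smH X Y"

lemma module_H: "module smH"
  using hopf by (simp add: cocomm_hopf_def module_iff_vector_space)

lemma smult_mult_left: "smH c x * y = smH c (x * y)"
  using hopf by (simp add: cocomm_hopf_def)

lemma smult_mult_right: "x * smH c y = smH c (x * y)"
  using hopf unfolding cocomm_hopf_def by metis

lemma coprod_add: "pl (D (x + y)) \<approx>\<^sub>H pl (D x @ D y)"
  using hopf by (simp add: cocomm_hopf_def)

lemma coprod_smult: "pl (D (smH c x)) \<approx>\<^sub>H pl (map (\<lambda>(a, b). (smH c a, b)) (D x))"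
  using hopf by (simp add: cocomm_hopf_def)

lemma coprod_mult: "pl (D (x * y)) \<approx>\<^sub>H [[a * c, b * d]. (a, b) \<leftarrow> D x, (c, d) \<leftarrow> D y]"
  using hopf by (simp add: cocomm_hopf_def)

lemma coassoc:
  "[[a, b1, b2]. (a, b) \<leftarrow> D x, (b1, b2) \<leftarrow> D b] \<approx>\<^sub>H [[a1, a2, b]. (a, b) \<leftarrow> D x, (a1, a2) \<leftarrow> D a]"
  using hopf by (simp add: cocomm_hopf_def)

lemma cocomm: "pl (D x) \<approx>\<^sub>H pl (map (\<lambda>(a, b). (b, a)) (D x))"
  using hopf by (simp add: cocomm_hopf_def)

lemma counit_mult: "eps (x * y) = eps x * eps y"
  using hopf by (simp add: cocomm_hopf_def)

lemma counit_left: "(\<Sum>(a, b)\<leftarrow>D x. smH (eps a) b) = x"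
  using hopf by (simp add: cocomm_hopf_def)

lemma counit_right: "(\<Sum>(a, b)\<leftarrow>D x. smH (eps b) a) = x"
  using hopf by (simp add: cocomm_hopf_def)

lemma antipode_add: "S (x + y) = S x + S y"
  using hopf by (simp add: cocomm_hopf_def Vector_Spaces.linear_iff)

lemma antipode_smult: "S (smH c x) = smH c (S x)"
  using hopf by (simp add: cocomm_hopf_def Vector_Spaces.linear_iff)

lemma antipode_left: "(\<Sum>(a, b)\<leftarrow>D x. S a * b) = smH (eps x) 1"
  using hopf by (simp add: cocomm_hopf_def)

lemma antipode_right: "(\<Sum>(a, b)\<leftarrow>D x. a * S b) = smH (eps x) 1"
  using hopf by (simp add: cocomm_hopf_def)

lemma smult_sum_list: "smH c (\<Sum>x\<leftarrow>xs. f x) = (\<Sum>x\<leftarrow>xs. smH c (f x))"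
  by (induction xs) (simp_all add: module.scale_right_distrib[OF module_H] module.scale_zero_right[OF module_H])

lemma antipode_sum_list: "S (\<Sum>x\<leftarrow>xs. f x) = (\<Sum>x\<leftarrow>xs. S (f x))"
  by (induction xs) (simp_all add: antipode_add, metis add.right_neutral antipode_add add_left_cancel)

lemma teqH_sym: "X \<approx>\<^sub>H Y \<Longrightarrow> Y \<approx>\<^sub>H X"
  unfolding teqH_def using module.span_neg[OF module_fscale] by fastforce

lemma sum_list_teqH_cong:
  fixes g :: "'h list \<Rightarrow> 'w::ab_group_add" and smW :: "'f \<Rightarrow> 'w \<Rightarrow> 'w"
  assumes W: "module smW" and U: "module.subspace smW U"
    and add: "\<And>xs a b ys. g (xs @ [a + b] @ ys) - g (xs @ [a] @ ys) - g (xs @ [b] @ ys) \<in> U"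
    and smult: "\<And>xs c a ys. g (xs @ [smH c a] @ ys) - smW c (g (xs @ [a] @ ys)) \<in> U"
    and XY: "X \<approx>\<^sub>H Y"
  shows "(\<Sum>x\<leftarrow>X. g x) - (\<Sum>x\<leftarrow>Y. g x) \<in> U"
proof -
  have rel: "finite (fsupp r) \<and> lin_ext smW g r \<in> U" if "r \<in> tensH_rel smH" for r
    using that unfolding tensH_rel_def
  proof safe
    fix xs a b ys
    show "lin_ext smW g (dlt (xs @ [a + b] @ ys) - dlt (xs @ [a] @ ys) - dlt (xs @ [b] @ ys)) \<in> U"
      using add[of xs a b ys] by (simp add: lin_ext_diff[OF W] lin_ext_dlt[OF W])
  next
    fix xs c a ys
    show "lin_ext smW g (dlt (xs @ [smH c a] @ ys) - fscale c (dlt (xs @ [a] @ ys))) \<in> U"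
      using smult[of xs c a ys] by (simp add: lin_ext_diff[OF W] lin_ext_dlt[OF W] lin_ext_fscale[OF W])
  qed simp_all
  have "lin_ext smW g (fvec X - fvec Y :: _ \<Rightarrow> 'f) \<in> U"
    using lin_ext_span_subspace[OF W U rel] XY by (simp add: teqH_def)
  then show ?thesis
    by (simp add: lin_ext_diff[OF W] lin_ext_fvec[OF W])
qed

lemma sum_list_teqH_eq:
  fixes g :: "'h list \<Rightarrow> 'w::ab_group_add" and smW :: "'f \<Rightarrow> 'w \<Rightarrow> 'w"
  assumes W: "module smW"
    and add: "\<And>xs a b ys. g (xs @ [a + b] @ ys) = g (xs @ [a] @ ys) + g (xs @ [b] @ ys)"
    and smult: "\<And>xs c a ys. g (xs @ [smH c a] @ ys) = smW c (g (xs @ [a] @ ys))"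
    and XY: "X \<approx>\<^sub>H Y"
  shows "(\<Sum>x\<leftarrow>X. g x) = (\<Sum>x\<leftarrow>Y. g x)"
  using sum_list_teqH_cong[OF W module.subspace_single_0[OF W], of g X Y] add smult XY by simp

definition H_bilinear :: "('f \<Rightarrow> 'w \<Rightarrow> 'w) \<Rightarrow> ('h \<Rightarrow> 'h \<Rightarrow> 'w::ab_group_add) \<Rightarrow> bool" where
  "H_bilinear smW F \<longleftrightarrow>
     (\<forall>x x' y. F (x + x') y = F x y + F x' y) \<and> (\<forall>x y y'. F x (y + y') = F x y + F x y')
   \<and> (\<forall>c x y. F (smH c x) y = smW c (F x y)) \<and> (\<forall>c x y. F x (smH c y) = smW c (F x y))"

definition H_trilinear :: "('f \<Rightarrow> 'w \<Rightarrow> 'w) \<Rightarrow> ('h \<Rightarrow> 'h \<Rightarrow> 'h \<Rightarrow> 'w::ab_group_add) \<Rightarrow> bool" where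
  "H_trilinear smW F \<longleftrightarrow>
     (\<forall>x x' y z. F (x + x') y z = F x y z + F x' y z)
   \<and> (\<forall>x y y' z. F x (y + y') z = F x y z + F x y' z)
   \<and> (\<forall>x y z z'. F x y (z + z') = F x y z + F x y z')
   \<and> (\<forall>c x y z. F (smH c x) y z = smW c (F x y z))
   \<and> (\<forall>c x y z. F x (smH c y) z = smW c (F x y z))
   \<and> (\<forall>c x y z. F x y (smH c z) = smW c (F x y z))"

lemma sum_app2_teqH_eq:
  assumes W: "module smW" and F: "H_bilinear smW F" and XY: "X \<approx>\<^sub>H Y"
  shows "(\<Sum>l\<leftarrow>X. app2 F l) = (\<Sum>l\<leftarrow>Y. app2 F l)"
proof (rule sum_list_teqH_eq[OF W _ _ XY])
  fix xs a b ys
  show "app2 F (xs @ [a + b] @ ys) = app2 F (xs @ [a] @ ys) + app2 F (xs @ [b] @ ys)"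
  proof (cases "length (xs @ [a] @ ys) = 2")
    case True
    then show ?thesis using F by (cases rule: length2_split) (auto simp: app2_def H_bilinear_def)
  qed (simp add: app2_def)
next
  fix xs c a ys
  show "app2 F (xs @ [smH c a] @ ys) = smW c (app2 F (xs @ [a] @ ys))"
  proof (cases "length (xs @ [a] @ ys) = 2")
    case True
    then show ?thesis using F by (cases rule: length2_split) (auto simp: app2_def H_bilinear_def)
  qed (simp add: app2_def module.scale_zero_right[OF W])
qed

lemma sum_app3_teqH_eq:
  assumes W: "module smW" and F: "H_trilinear smW F" and XY: "X \<approx>\<^sub>H Y"
  shows "(\<Sum>l\<leftarrow>X. app3 F l) = (\<Sum>l\<leftarrow>Y. app3 F l)"
proof (rule sum_list_teqH_eq[OF W _ _ XY])
  fix xs a b ys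
  show "app3 F (xs @ [a + b] @ ys) = app3 F (xs @ [a] @ ys) + app3 F (xs @ [b] @ ys)"
  proof (cases "length (xs @ [a] @ ys) = 3")
    case True
    then show ?thesis using F by (cases rule: length3_split) (auto simp: app3_def H_trilinear_def)
  qed (simp add: app3_def)
next
  fix xs c a ys
  show "app3 F (xs @ [smH c a] @ ys) = smW c (app3 F (xs @ [a] @ ys))"
  proof (cases "length (xs @ [a] @ ys) = 3")
    case True
    then show ?thesis using F by (cases rule: length3_split) (auto simp: app3_def H_trilinear_def)
  qed (simp add: app3_def module.scale_zero_right[OF W])
qed

lemma sum_coprod_swap:
  assumes W: "module smW" and F: "H_bilinear smW F"
  shows "(\<Sum>(a, b)\<leftarrow>D h. F a b) = (\<Sum>(a, b)\<leftarrow>D h. F b a)"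
  using sum_app2_teqH_eq[OF W F cocomm[of h]]
  by (simp add: pl_def app2_def case_prod_unfold o_def)

lemma sum_coprod_coassoc:
  assumes W: "module smW" and F: "H_trilinear smW F"
  shows "(\<Sum>(a, b)\<leftarrow>D h. \<Sum>(a1, a2)\<leftarrow>D a. F a1 a2 b) = (\<Sum>(a, b)\<leftarrow>D h. \<Sum>(b1, b2)\<leftarrow>D b. F a b1 b2)"
  using sum_app3_teqH_eq[OF W F coassoc[of h]]
  by (simp add: sum_list_map_concat app3_def case_prod_unfold o_def)

lemma sum_coprod3_swap23:
  assumes W: "module smW" and F: "H_trilinear smW F"
  shows "(\<Sum>(a, b)\<leftarrow>D h. \<Sum>(a1, a2)\<leftarrow>D a. F a1 a2 b) = (\<Sum>(a, b)\<leftarrow>D h. \<Sum>(a1, a2)\<leftarrow>D a. F a1 b a2)"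
proof -
  have F': "H_trilinear smW (\<lambda>x y z. F x z y)"
    using F by (simp add: H_trilinear_def)
  have "(\<Sum>(a, b)\<leftarrow>D h. \<Sum>(b1, b2)\<leftarrow>D b. F a b1 b2) = (\<Sum>(a, b)\<leftarrow>D h. \<Sum>(b1, b2)\<leftarrow>D b. F a b2 b1)"
    using F by (intro arg_cong[where f = sum_list] map_cong refl, clarify, intro sum_coprod_swap[OF W])
      (simp add: H_trilinear_def H_bilinear_def)
  with sum_coprod_coassoc[OF W F] sum_coprod_coassoc[OF W F'] show ?thesis
    by simp
qed

end

context cocomm_hopf_algebra
begin

lemma antipode_coprod_mult:
  "(\<Sum>(a1, a2)\<leftarrow>D a. \<Sum>(c1, c2)\<leftarrow>D c. S (a1 * c1) * (a2 * c2)) = smH (eps a * eps c) 1"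
proof -
  have bilin: "H_bilinear smH (\<lambda>u v. S u * v)"
    by (simp add: H_bilinear_def antipode_add antipode_smult distrib_left distrib_right
        smult_mult_left smult_mult_right)
  have "(\<Sum>(a1, a2)\<leftarrow>D a. \<Sum>(c1, c2)\<leftarrow>D c. S (a1 * c1) * (a2 * c2))
      = (\<Sum>l\<leftarrow>[[a1 * c1, a2 * c2]. (a1, a2) \<leftarrow> D a, (c1, c2) \<leftarrow> D c]. app2 (\<lambda>u v. S u * v) l)"
    by (simp add: sum_list_map_concat app2_def case_prod_unfold o_def)
  also have "\<dots> = (\<Sum>l\<leftarrow>pl (D (a * c)). app2 (\<lambda>u v. S u * v) l)"
    by (rule sum_app2_teqH_eq[OF module_H bilin teqH_sym[OF coprod_mult]])
  also have "\<dots> = smH (eps a * eps c) 1"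
    by (simp add: pl_def app2_def case_prod_unfold o_def antipode_left[unfolded case_prod_unfold] counit_mult)
  finally show ?thesis .
qed

lemma antipode_counit: "S y = (\<Sum>(c, d)\<leftarrow>D y. smH (eps c) (S d))"
  using arg_cong[OF counit_left[of y], of S]
  by (simp add: antipode_sum_list case_prod_unfold antipode_smult)

text \<open>Both sides of \<open>S(x y) = S(y) S(x)\<close> are values of the Sweedler sum
  \<open>S(x\<^sub>1 y\<^sub>1) x\<^sub>2 y\<^sub>2 S(y\<^sub>3) S(x\<^sub>3)\<close>: contracting \<open>S(u\<^sub>1) u\<^sub>2 = \<epsilon>(u)\<close>
  for \<open>u = x y\<close> gives \<open>S(y) S(x)\<close>, contracting \<open>u\<^sub>1 S(u\<^sub>2) = \<epsilon>(u)\<close> for \<open>u = y\<close> and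
  then \<open>u = x\<close> gives \<open>S(x y)\<close>.\<close>
lemma antipode_mult_expansion_rev:
  "(\<Sum>(a, b)\<leftarrow>D x. \<Sum>(a1, a2)\<leftarrow>D a. \<Sum>(c, d)\<leftarrow>D y. \<Sum>(c1, c2)\<leftarrow>D c.
      S (a1 * c1) * a2 * c2 * S d * S b) = S y * S x"
proof -
  have "(\<Sum>(a, b)\<leftarrow>D x. \<Sum>(a1, a2)\<leftarrow>D a. \<Sum>(c, d)\<leftarrow>D y. \<Sum>(c1, c2)\<leftarrow>D c.
          S (a1 * c1) * a2 * c2 * S d * S b)
      = (\<Sum>(a, b)\<leftarrow>D x. \<Sum>(c, d)\<leftarrow>D y. \<Sum>(a1, a2)\<leftarrow>D a. \<Sum>(c1, c2)\<leftarrow>D c.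
          S (a1 * c1) * a2 * c2 * S d * S b)"
    by (intro arg_cong[where f = sum_list] map_cong refl, clarify, rule sum_list_swap_pairs)
  also have "\<dots> = (\<Sum>(a, b)\<leftarrow>D x. \<Sum>(c, d)\<leftarrow>D y. smH (eps a * eps c) 1 * (S d * S b))"
  proof -
    have "(\<Sum>(a1, a2)\<leftarrow>D a. \<Sum>(c1, c2)\<leftarrow>D c. S (a1 * c1) * a2 * c2 * S d * S b)
        = (\<Sum>(a1, a2)\<leftarrow>D a. \<Sum>(c1, c2)\<leftarrow>D c. S (a1 * c1) * (a2 * c2)) * (S d * S b)" for a b c d
      by (simp add: sum_list_mult_const[symmetric] mult.assoc case_prod_unfold)
    then show ?thesis by (simp add: antipode_coprod_mult)
  qed
  also have "\<dots> = (\<Sum>(a, b)\<leftarrow>D x. \<Sum>(c, d)\<leftarrow>D y. smH (eps c) (S d) * smH (eps a) (S b))"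
    by (simp add: smult_mult_left smult_mult_right module.scale_scale[OF module_H] mult.commute)
  also have "\<dots> = (\<Sum>(c, d)\<leftarrow>D y. smH (eps c) (S d)) * (\<Sum>(a, b)\<leftarrow>D x. smH (eps a) (S b))"
    by (simp add: sum_list_mult_const sum_list_const_mult case_prod_unfold)
  also have "\<dots> = S y * S x"
    by (simp add: antipode_counit[symmetric])
  finally show ?thesis .
qed

lemma antipode_mult_expansion_inner:
  "(\<Sum>(c, d)\<leftarrow>D y. \<Sum>(c1, c2)\<leftarrow>D c. S (a * c1) * b1 * c2 * S d * S b2) = S (a * y) * b1 * S b2"
proof -
  have G: "H_trilinear smH (\<lambda>c1 c2 d. S (a * c1) * b1 * c2 * S d * S b2)"
    by (simp add: H_trilinear_def distrib_left distrib_right antipode_add antipode_smult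
        smult_mult_left smult_mult_right)
  have "(\<Sum>(c, d)\<leftarrow>D y. \<Sum>(c1, c2)\<leftarrow>D c. S (a * c1) * b1 * c2 * S d * S b2)
      = (\<Sum>(c, d)\<leftarrow>D y. \<Sum>(d1, d2)\<leftarrow>D d. S (a * c) * b1 * d1 * S d2 * S b2)"
    using sum_coprod_coassoc[OF module_H G, of y] by simp
  also have "\<dots> = (\<Sum>(c, d)\<leftarrow>D y. smH (eps d) (S (a * c) * b1 * S b2))"
  proof -
    have "(\<Sum>(d1, d2)\<leftarrow>D d. S (a * c) * b1 * d1 * S d2 * S b2)
        = (S (a * c) * b1) * (\<Sum>(d1, d2)\<leftarrow>D d. d1 * S d2) * S b2" for c d
      by (simp add: sum_list_mult_const[symmetric] sum_list_const_mult[symmetric] mult.assoc case_prod_unfold)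
    then show ?thesis by (simp add: antipode_right smult_mult_left smult_mult_right)
  qed
  also have "\<dots> = S (a * (\<Sum>(c, d)\<leftarrow>D y. smH (eps d) c)) * b1 * S b2"
    by (simp add: sum_list_const_mult[symmetric] sum_list_mult_const[symmetric] antipode_sum_list
        case_prod_unfold antipode_smult smult_mult_left smult_mult_right)
  also have "\<dots> = S (a * y) * b1 * S b2"
    by (simp add: counit_right)
  finally show ?thesis .
qed

lemma antipode_mult_expansion:
  "(\<Sum>(a, b)\<leftarrow>D x. \<Sum>(a1, a2)\<leftarrow>D a. \<Sum>(c, d)\<leftarrow>D y. \<Sum>(c1, c2)\<leftarrow>D c.
      S (a1 * c1) * a2 * c2 * S d * S b) = S (x * y)"
proof -
  define F where "F a1 a2 b = (\<Sum>(c, d)\<leftarrow>D y. \<Sum>(c1, c2)\<leftarrow>D c. S (a1 * c1) * a2 * c2 * S d * S b)"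
    for a1 a2 b
  have trilin: "H_trilinear smH F"
    unfolding H_trilinear_def F_def
    by (simp add: case_prod_unfold distrib_left distrib_right antipode_add antipode_smult
        smult_mult_left smult_mult_right sum_list_addf smult_sum_list)
  have "(\<Sum>(a, b)\<leftarrow>D x. \<Sum>(a1, a2)\<leftarrow>D a. F a1 a2 b) = (\<Sum>(a, b)\<leftarrow>D x. \<Sum>(b1, b2)\<leftarrow>D b. F a b1 b2)"
    by (rule sum_coprod_coassoc[OF module_H trilin])
  also have "\<dots> = (\<Sum>(a, b)\<leftarrow>D x. \<Sum>(b1, b2)\<leftarrow>D b. S (a * y) * b1 * S b2)"
    by (simp only: F_def antipode_mult_expansion_inner)
  also have "\<dots> = (\<Sum>(a, b)\<leftarrow>D x. S (a * y) * (\<Sum>(b1, b2)\<leftarrow>D b. b1 * S b2))"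
    by (simp add: sum_list_const_mult[symmetric] mult.assoc case_prod_unfold)
  also have "\<dots> = S ((\<Sum>(a, b)\<leftarrow>D x. smH (eps b) a) * y)"
    by (simp add: antipode_right[unfolded case_prod_unfold] sum_list_mult_const[symmetric]
        antipode_sum_list case_prod_unfold
        antipode_smult smult_mult_left smult_mult_right)
  finally show ?thesis
    by (simp add: F_def counit_right)
qed

lemma antipode_mult: "S (x * y) = S y * S x"
  using antipode_mult_expansion antipode_mult_expansion_rev by metis

end

section \<open>The tensor products \<open>H\<^sup>\<otimes>\<^sup>r \<otimes>\<^sub>H V\<close>\<close>

definition tapp2 :: "('h \<Rightarrow> 'h \<Rightarrow> 'a list) \<Rightarrow> 'h list \<Rightarrow> 'a list" where
  "tapp2 F l = (if length l = 2 then F (l ! 0) (l ! 1) else [])"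

definition tapp3 :: "('h \<Rightarrow> 'h \<Rightarrow> 'h \<Rightarrow> 'a list) \<Rightarrow> 'h list \<Rightarrow> 'a list" where
  "tapp3 F l = (if length l = 3 then F (l ! 0) (l ! 1) (l ! 2) else [])"

locale H_supermodule = cocomm_hopf_algebra smH D eps S
  for smH :: "'f::field_char_0 \<Rightarrow> 'h::ring_1 \<Rightarrow> 'h" and D eps S +
  fixes smV :: "'f \<Rightarrow> 'v::ab_group_add \<Rightarrow> 'v" and V0 V1 :: "'v set" and act :: "'h \<Rightarrow> 'v \<Rightarrow> 'v"
  assumes super: "superspace smV V0 V1" and hmod: "Hmodule smH smV V0 V1 act"
begin

abbreviation teqV_infix :: "('h list \<times> 'v) list \<Rightarrow> ('h list \<times> 'v) list \<Rightarrow> bool" (infix "\<approx>" 50) where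
  "X \<approx> Y \<equiv> teqV smH smV D act X Y"

abbreviation span_relV :: "('h list \<times> 'v \<Rightarrow> 'f) set" where
  "span_relV \<equiv> module.span fscale (tensV_rel smH smV D act)"

lemma module_V: "module smV"
  using super by (simp add: superspace_def module_iff_vector_space)

lemma act_add_left: "act (x + y) v = act x v + act y v"
  using hmod by (simp add: Hmodule_def)

lemma act_smult_left: "act (smH c x) v = smV c (act x v)"
  using hmod by (simp add: Hmodule_def)

lemma act_mult: "act (x * y) v = act x (act y v)"
  using hmod by (simp add: Hmodule_def)

lemma act_one: "act 1 v = v"
  using hmod by (simp add: Hmodule_def)

lemma act_parity: "v \<in> Vp V0 V1 p \<Longrightarrow> act x v \<in> Vp V0 V1 p"
  using hmod by (cases p) (auto simp: Hmodule_def Vp_def image_subset_iff)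

lemma act_sum_list_left: "act (\<Sum>x\<leftarrow>xs. f x) v = (\<Sum>x\<leftarrow>xs. act (f x) v)"
proof (induction xs)
  case Nil
  show ?case using act_add_left[of 0 0 v] by simp
next
  case (Cons x xs)
  then show ?case by (simp add: act_add_left)
qed

lemma scT_scT: "scT smV a (scT smV b X) = scT smV (a * b) X"
  by (induction X) (auto simp: scT_def module.scale_scale[OF module_V])

lemma scT_one: "scT smV 1 X = X"
  by (induction X) (auto simp: scT_def module.scale_one[OF module_V])

lemma teqV_refl [simp]: "X \<approx> X"
  using module.span_zero[OF module_fscale] by (simp add: teqV_def)

lemma teqV_if_fvec_eq: "fvec X = (fvec Y :: _ \<Rightarrow> 'f) \<Longrightarrow> X \<approx> Y"
  using module.span_zero[OF module_fscale] by (simp add: teqV_def)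

lemma teqV_sym: "X \<approx> Y \<Longrightarrow> Y \<approx> X"
  unfolding teqV_def using module.span_neg[OF module_fscale] by fastforce

lemma teqV_trans [trans]: "X \<approx> Y \<Longrightarrow> Y \<approx> Z \<Longrightarrow> X \<approx> Z"
  unfolding teqV_def using module.span_add[OF module_fscale] by fastforce

lemma eq_teqV_trans [trans]: "X = Y \<Longrightarrow> Y \<approx> Z \<Longrightarrow> X \<approx> Z"
  by simp

lemma teqV_eq_trans [trans]: "X \<approx> Y \<Longrightarrow> Y = Z \<Longrightarrow> X \<approx> Z"
  by simp

lemma teqV_append: "X \<approx> Y \<Longrightarrow> Z \<approx> W \<Longrightarrow> X @ Z \<approx> Y @ W"
  unfolding teqV_def fvec_append
  using module.span_add[OF module_fscale] by (fastforce simp: algebra_simps)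

lemma teqV_mset: "mset X = mset Y \<Longrightarrow> X \<approx> Y"
  by (intro teqV_if_fvec_eq fvec_mset_cong)

lemma teqV_concat: "(\<And>x. x \<in> set xs \<Longrightarrow> F x \<approx> G x) \<Longrightarrow> concat (map F xs) \<approx> concat (map G xs)"
  by (induction xs) (auto intro: teqV_append)

lemma relV_in_span: "r \<in> tensV_rel smH smV D act \<Longrightarrow> r \<in> span_relV"
  by (rule module.span_base[OF module_fscale])

lemma relV_Hadd:
  "dlt (xs @ [a + b] @ ys, e) - dlt (xs @ [a] @ ys, e) - dlt (xs @ [b] @ ys, e) \<in> span_relV"
  by (rule relV_in_span) (unfold tensV_rel_def, blast)

lemma relV_Hsmult: "dlt (xs @ [smH c a] @ ys, e) - fscale c (dlt (xs @ [a] @ ys, e)) \<in> span_relV"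
  by (rule relV_in_span) (unfold tensV_rel_def, blast)

lemma relV_Vadd: "dlt (fs, e + e') - dlt (fs, e) - dlt (fs, e') \<in> span_relV"
  by (rule relV_in_span) (unfold tensV_rel_def, blast)

lemma relV_Vsmult: "dlt (fs, smV c e) - fscale c (dlt (fs, e)) \<in> span_relV"
  by (rule relV_in_span) (unfold tensV_rel_def, blast)

lemma relV_balanced:
  "fs \<noteq> [] \<Longrightarrow>
    fvec (map (\<lambda>hs. (map2 (*) fs hs, e)) (coprod_iter D (length fs) h)) - dlt (fs, act h e) \<in> span_relV"
  by (rule relV_in_span) (unfold tensV_rel_def, blast)

lemma teqV_Hadd: "[(xs @ [a + b] @ ys, e)] \<approx> [(xs @ [a] @ ys, e), (xs @ [b] @ ys, e)]"
  using relV_Hadd[of xs a b ys e] by (simp add: teqV_def fvec_Cons fvec_Nil algebra_simps)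

lemma teqV_Vadd: "[(fs, e + e')] \<approx> [(fs, e), (fs, e')]"
  using relV_Vadd[of fs e e'] by (simp add: teqV_def fvec_Cons fvec_Nil algebra_simps)

lemma teqV_balanced:
  "fs \<noteq> [] \<Longrightarrow> map (\<lambda>hs. (map2 (*) fs hs, e)) (coprod_iter D (length fs) h) \<approx> [(fs, act h e)]"
  using relV_balanced by (simp add: teqV_def fvec_single)

lemma fscale_fvec_scT: "fscale c (fvec X) - fvec (scT smV c X) \<in> span_relV"
proof (induction X)
  case Nil
  have "fscale c (\<lambda>x. 0) = (0 :: 'h list \<times> 'v \<Rightarrow> 'f)"
    by (simp add: fscale_def zero_fun_def)
  then show ?case
    using module.span_zero[OF module_fscale] by (simp add: scT_def fvec_Nil zero_fun_def)
next
  case (Cons x X)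
  obtain fs e where x: "x = (fs, e)" by (cases x)
  have eq: "fscale c (fvec (x # X)) - fvec (scT smV c (x # X))
      = (fscale c (fvec X) - fvec (scT smV c X)) - (dlt (fs, smV c e) - fscale c (dlt (fs, e)))"
    by (simp add: x scT_def fscale_add fvec_Cons algebra_simps)
  show ?case
    unfolding eq by (rule module.span_diff[OF module_fscale Cons.IH relV_Vsmult])
qed

lemma teqV_Hsmult: "[(xs @ [smH c a] @ ys, e)] \<approx> [(xs @ [a] @ ys, smV c e)]"
proof -
  have "(dlt (xs @ [smH c a] @ ys, e) - fscale c (dlt (xs @ [a] @ ys, e)))
      + (fscale c (fvec [(xs @ [a] @ ys, e)]) - fvec (scT smV c [(xs @ [a] @ ys, e)])) \<in> span_relV"
    by (rule module.span_add[OF module_fscale relV_Hsmult fscale_fvec_scT])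
  then show ?thesis
    by (simp add: teqV_def scT_def fvec_single)
qed

lemma teqV_zero: "[(fs, 0)] \<approx> []"
proof -
  have "fscale 0 v = 0" for v :: "'h list \<times> 'v \<Rightarrow> 'f"
    by (simp add: fscale_def fun_eq_iff)
  then show ?thesis
    using relV_Vsmult[of fs 0 0] by (simp add: teqV_def fvec_single fvec_Nil module.scale_zero_left[OF module_V])
qed

lemma teqV_sum_list: "map (\<lambda>x. (fs, g x)) xs \<approx> [(fs, \<Sum>x\<leftarrow>xs. g x)]"
proof (induction xs)
  case Nil
  show ?case using teqV_sym[OF teqV_zero] by simp
next
  case (Cons x xs)
  have "map (\<lambda>x. (fs, g x)) (x # xs) \<approx> [(fs, g x)] @ [(fs, \<Sum>x\<leftarrow>xs. g x)]"
    using teqV_append[OF teqV_refl[of "[(fs, g x)]"] Cons.IH] by simp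
  also have "\<dots> \<approx> [(fs, g x + (\<Sum>x\<leftarrow>xs. g x))]"
    using teqV_sym[OF teqV_Vadd] by simp
  finally show ?case by simp
qed

lemma teqV_add_fst: "[([a + b, f], e)] \<approx> [([a, f], e), ([b, f], e)]"
  using teqV_Hadd[of "[]" a b "[f]" e] by simp

lemma teqV_add_snd: "[([f, a + b], e)] \<approx> [([f, a], e), ([f, b], e)]"
  using teqV_Hadd[of "[f]" a b "[]" e] by simp

lemma teqV_smult_fst: "[([smH c a, f], e)] \<approx> [([a, f], smV c e)]"
  using teqV_Hsmult[of "[]" c a "[f]" e] by simp

lemma teqV_smult_snd: "[([f, smH c a], e)] \<approx> [([f, a], smV c e)]"
  using teqV_Hsmult[of "[f]" c a "[]" e] by simp

end

context H_supermodule
begin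

lemma fvec_minus_fscale_in_span:
  assumes "X \<approx> scT smV c Y"
  shows "fvec X - fscale c (fvec Y) \<in> span_relV"
proof -
  have "(fvec X - fvec (scT smV c Y)) - (fscale c (fvec Y) - fvec (scT smV c Y)) \<in> span_relV"
    by (rule module.span_diff[OF module_fscale assms[unfolded teqV_def] fscale_fvec_scT])
  then show ?thesis
    by simp
qed

lemma fvec_minus_append_in_span:
  assumes "X \<approx> Y @ Z"
  shows "fvec X - fvec Y - fvec Z \<in> span_relV"
  using assms by (simp add: teqV_def fvec_append diff_diff_eq)

context
  fixes \<phi> :: "'h list \<times> 'v \<Rightarrow> ('h list \<times> 'v) list"
  assumes Hadd: "\<And>xs a b ys e. \<phi> (xs @ [a + b] @ ys, e) \<approx> \<phi> (xs @ [a] @ ys, e) @ \<phi> (xs @ [b] @ ys, e)"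
    and Hsmult: "\<And>xs c a ys e. \<phi> (xs @ [smH c a] @ ys, e) \<approx> scT smV c (\<phi> (xs @ [a] @ ys, e))"
    and Vadd: "\<And>fs e e'. \<phi> (fs, e + e') \<approx> \<phi> (fs, e) @ \<phi> (fs, e')"
    and Vsmult: "\<And>fs c e. \<phi> (fs, smV c e) \<approx> scT smV c (\<phi> (fs, e))"
    and balanced: "\<And>fs h e. fs \<noteq> [] \<Longrightarrow>
      concat (map (\<lambda>hs. \<phi> (map2 (*) fs hs, e)) (coprod_iter D (length fs) h)) \<approx> \<phi> (fs, act h e)"
begin

lemma lin_ext_relV_in_span:
  assumes "r \<in> tensV_rel smH smV D act"
  shows "finite (fsupp r) \<and> lin_ext fscale (\<lambda>x. fvec (\<phi> x)) r \<in> span_relV"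
proof -
  note lin_ext_simps = lin_ext_diff[OF module_fscale] lin_ext_dlt[OF module_fscale]
    lin_ext_fscale[OF module_fscale] lin_ext_fvec[OF module_fscale] fvec_concat[symmetric]
  from assms consider
    (H_add) xs a b ys e where "r = dlt (xs @ [a + b] @ ys, e) - dlt (xs @ [a] @ ys, e) - dlt (xs @ [b] @ ys, e)"
  | (H_smult) xs c a ys e where "r = dlt (xs @ [smH c a] @ ys, e) - fscale c (dlt (xs @ [a] @ ys, e))"
  | (V_add) fs e e' where "r = dlt (fs, e + e') - dlt (fs, e) - dlt (fs, e')"
  | (V_smult) fs c e where "r = dlt (fs, smV c e) - fscale c (dlt (fs, e))"
  | (bal) fs h e where "fs \<noteq> []"
      "r = fvec (map (\<lambda>hs. (map2 (*) fs hs, e)) (coprod_iter D (length fs) h)) - dlt (fs, act h e)"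
    unfolding tensV_rel_def by blast
  then show ?thesis
  proof cases
    case H_add
    then show ?thesis using fvec_minus_append_in_span[OF Hadd] by (simp add: lin_ext_simps)
  next
    case H_smult
    then show ?thesis using fvec_minus_fscale_in_span[OF Hsmult] by (simp add: lin_ext_simps)
  next
    case V_add
    then show ?thesis using fvec_minus_append_in_span[OF Vadd] by (simp add: lin_ext_simps)
  next
    case V_smult
    then show ?thesis using fvec_minus_fscale_in_span[OF Vsmult] by (simp add: lin_ext_simps)
  next
    case bal
    then show ?thesis using balanced[OF bal(1), unfolded teqV_def] by (simp add: lin_ext_simps o_def)
  qed
qed

lemma teqV_concat_cong:
  assumes "X \<approx> Y"
  shows "concat (map \<phi> X) \<approx> concat (map \<phi> Y)"
proof -
  have "lin_ext fscale (\<lambda>x. fvec (\<phi> x)) (fvec X - fvec Y) \<in> span_relV"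
    using lin_ext_span_subspace[OF module_fscale module.subspace_span[OF module_fscale]
        lin_ext_relV_in_span] assms
    by (simp add: teqV_def)
  then show ?thesis
    by (simp add: teqV_def lin_ext_diff[OF module_fscale] lin_ext_fvec[OF module_fscale] fvec_concat)
qed

end

lemma teqH_concat_teqV_cong:
  fixes \<psi> :: "'h list \<Rightarrow> ('h list \<times> 'v) list"
  assumes add: "\<And>xs a b ys. \<psi> (xs @ [a + b] @ ys) \<approx> \<psi> (xs @ [a] @ ys) @ \<psi> (xs @ [b] @ ys)"
    and smult: "\<And>xs c a ys. \<psi> (xs @ [smH c a] @ ys) \<approx> scT smV c (\<psi> (xs @ [a] @ ys))"
    and XY: "X \<approx>\<^sub>H Y"
  shows "concat (map \<psi> X) \<approx> concat (map \<psi> Y)"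
  using sum_list_teqH_cong[OF module_fscale module.subspace_span[OF module_fscale],
      of "\<lambda>l. fvec (\<psi> l)", OF fvec_minus_append_in_span[OF add] fvec_minus_fscale_in_span[OF smult] XY]
  by (simp add: teqV_def fvec_concat)

definition teqV_bilinear :: "('h \<Rightarrow> 'h \<Rightarrow> ('h list \<times> 'v) list) \<Rightarrow> bool" where
  "teqV_bilinear F \<longleftrightarrow>
     (\<forall>x x' y. F (x + x') y \<approx> F x y @ F x' y) \<and> (\<forall>x y y'. F x (y + y') \<approx> F x y @ F x y')
   \<and> (\<forall>c x y. F (smH c x) y \<approx> scT smV c (F x y)) \<and> (\<forall>c x y. F x (smH c y) \<approx> scT smV c (F x y))"

definition teqV_trilinear :: "('h \<Rightarrow> 'h \<Rightarrow> 'h \<Rightarrow> ('h list \<times> 'v) list) \<Rightarrow> bool" where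
  "teqV_trilinear F \<longleftrightarrow>
     (\<forall>x x' y z. F (x + x') y z \<approx> F x y z @ F x' y z)
   \<and> (\<forall>x y y' z. F x (y + y') z \<approx> F x y z @ F x y' z)
   \<and> (\<forall>x y z z'. F x y (z + z') \<approx> F x y z @ F x y z')
   \<and> (\<forall>c x y z. F (smH c x) y z \<approx> scT smV c (F x y z))
   \<and> (\<forall>c x y z. F x (smH c y) z \<approx> scT smV c (F x y z))
   \<and> (\<forall>c x y z. F x y (smH c z) \<approx> scT smV c (F x y z))"

lemma concat_tapp2_teqH_cong:
  assumes F: "teqV_bilinear F" and XY: "X \<approx>\<^sub>H Y"
  shows "concat (map (tapp2 F) X) \<approx> concat (map (tapp2 F) Y)"
proof (rule teqH_concat_teqV_cong[OF _ _ XY])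
  fix xs a b ys
  show "tapp2 F (xs @ [a + b] @ ys) \<approx> tapp2 F (xs @ [a] @ ys) @ tapp2 F (xs @ [b] @ ys)"
  proof (cases "length (xs @ [a] @ ys) = 2")
    case True
    then show ?thesis using F by (cases rule: length2_split) (auto simp: tapp2_def teqV_bilinear_def)
  qed (simp add: tapp2_def)
next
  fix xs c a ys
  show "tapp2 F (xs @ [smH c a] @ ys) \<approx> scT smV c (tapp2 F (xs @ [a] @ ys))"
  proof (cases "length (xs @ [a] @ ys) = 2")
    case True
    then show ?thesis using F by (cases rule: length2_split) (auto simp: tapp2_def teqV_bilinear_def)
  qed (simp add: tapp2_def scT_def)
qed

lemma concat_tapp3_teqH_cong:
  assumes F: "teqV_trilinear F" and XY: "X \<approx>\<^sub>H Y"
  shows "concat (map (tapp3 F) X) \<approx> concat (map (tapp3 F) Y)"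
proof (rule teqH_concat_teqV_cong[OF _ _ XY])
  fix xs a b ys
  show "tapp3 F (xs @ [a + b] @ ys) \<approx> tapp3 F (xs @ [a] @ ys) @ tapp3 F (xs @ [b] @ ys)"
  proof (cases "length (xs @ [a] @ ys) = 3")
    case True
    then show ?thesis using F by (cases rule: length3_split) (auto simp: tapp3_def teqV_trilinear_def)
  qed (simp add: tapp3_def)
next
  fix xs c a ys
  show "tapp3 F (xs @ [smH c a] @ ys) \<approx> scT smV c (tapp3 F (xs @ [a] @ ys))"
  proof (cases "length (xs @ [a] @ ys) = 3")
    case True
    then show ?thesis using F by (cases rule: length3_split) (auto simp: tapp3_def teqV_trilinear_def)
  qed (simp add: tapp3_def scT_def)
qed

lemma concat_coprod_teqH_cong:
  assumes F: "teqV_bilinear F" and "pl (D h) \<approx>\<^sub>H Y"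
  shows "concat (map (\<lambda>(a, b). F a b) (D h)) \<approx> concat (map (tapp2 F) Y)"
proof -
  have "concat (map (\<lambda>(a, b). F a b) (D h)) = concat (map (tapp2 F) (pl (D h)))"
    by (simp add: pl_def tapp2_def case_prod_unfold o_def)
  also have "\<dots> \<approx> concat (map (tapp2 F) Y)"
    by (rule concat_tapp2_teqH_cong[OF F assms(2)])
  finally show ?thesis .
qed

lemma concat_coprod_swap:
  assumes F: "teqV_bilinear F"
  shows "concat (map (\<lambda>(a, b). F a b) (D h)) \<approx> concat (map (\<lambda>(a, b). F b a) (D h))"
  using concat_coprod_teqH_cong[OF F cocomm[of h]]
  by (simp add: pl_def tapp2_def case_prod_unfold o_def)

lemma concat_coprod_coassoc:
  assumes F: "teqV_trilinear F"
  shows "concat (map (\<lambda>(a, b). concat (map (\<lambda>(a1, a2). F a1 a2 b) (D a))) (D h))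
       \<approx> concat (map (\<lambda>(a, b). concat (map (\<lambda>(b1, b2). F a b1 b2) (D b))) (D h))"
  using concat_tapp3_teqH_cong[OF F teqH_sym[OF coassoc[of h]]]
  by (simp add: tapp3_def concat_map_concat case_prod_unfold o_def)

lemma concat_coprod3_swap23:
  assumes F: "teqV_trilinear F"
  shows "concat (map (\<lambda>(a, b). concat (map (\<lambda>(a1, a2). F a1 a2 b) (D a))) (D h))
       \<approx> concat (map (\<lambda>(a, b). concat (map (\<lambda>(a1, a2). F a1 b a2) (D a))) (D h))"
proof -
  have F': "teqV_trilinear (\<lambda>x y z. F x z y)"
    using F by (simp add: teqV_trilinear_def)
  have "concat (map (\<lambda>(a, b). concat (map (\<lambda>(a1, a2). F a1 a2 b) (D a))) (D h))
      \<approx> concat (map (\<lambda>(a, b). concat (map (\<lambda>(b1, b2). F a b1 b2) (D b))) (D h))"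
    by (rule concat_coprod_coassoc[OF F])
  also have "\<dots> \<approx> concat (map (\<lambda>(a, b). concat (map (\<lambda>(b1, b2). F a b2 b1) (D b))) (D h))"
  proof (rule teqV_concat, clarify)
    fix a b
    have "teqV_bilinear (F a)"
      using F by (simp add: teqV_trilinear_def teqV_bilinear_def)
    then show "concat (map (\<lambda>(b1, b2). F a b1 b2) (D b)) \<approx> concat (map (\<lambda>(b1, b2). F a b2 b1) (D b))"
      by (rule concat_coprod_swap)
  qed
  also have "\<dots> \<approx> concat (map (\<lambda>(a, b). concat (map (\<lambda>(a1, a2). F a1 b a2) (D a))) (D h))"
    by (rule teqV_sym[OF concat_coprod_coassoc[OF F']])
  finally show ?thesis .
qed

end

section \<open>Left multiplication on \<open>(H \<otimes> H) \<otimes>\<^sub>H V\<close>\<close>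

definition deg2 :: "('a list \<times> 'b) list \<Rightarrow> bool" where
  "deg2 X \<longleftrightarrow> (\<forall>(fs, e)\<in>set X. length fs = 2)"

lemma length2_conv: "length fs = 2 \<longleftrightarrow> (\<exists>f0 f1. fs = [f0, f1])"
  by (auto simp: numeral_2_eq_2 length_Suc_conv)

lemma length_coprod_iter: "hs \<in> set (coprod_iter D (Suc k) h) \<Longrightarrow> length hs = Suc k"
  by (induction k arbitrary: h hs) auto

lemma coprod_iter_2: "coprod_iter D 2 h = pl (D h)"
  by (simp add: numeral_2_eq_2 pl_def case_prod_unfold o_def)

context H_supermodule
begin

definition H_compatible :: "('v \<Rightarrow> 'v \<Rightarrow> 'v) \<Rightarrow> bool" where
  "H_compatible m \<longleftrightarrow>
     (\<forall>a a' b. m (a + a') b = m a b + m a' b) \<and> (\<forall>a b b'. m a (b + b') = m a b + m a b')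
   \<and> (\<forall>c a b. m (smV c a) b = smV c (m a b) \<and> m a (smV c b) = smV c (m a b))
   \<and> (\<forall>h a b. act h (m a b) = (\<Sum>(x, y)\<leftarrow>D h. m (act x a) (act y b)))"

lemma H_compatible_flip:
  assumes m: "H_compatible m"
  shows "H_compatible (\<lambda>u d. m d u)"
proof -
  have "act h (m d u) = (\<Sum>(x, y)\<leftarrow>D h. m (act y d) (act x u))" for h u d
  proof -
    have "H_bilinear smV (\<lambda>x y. m (act x d) (act y u))"
      using m by (simp add: H_bilinear_def H_compatible_def act_add_left act_smult_left)
    then show ?thesis
      using m sum_coprod_swap[OF module_V] by (simp add: H_compatible_def)
  qed
  with m show ?thesis
    by (simp add: H_compatible_def)
qed

text \<open>This identity is what makes left multiplication compatible with the balancing relation.\<close>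
lemma H_compatible_act_antipode:
  assumes m: "H_compatible m"
  shows "m z (act h e) = (\<Sum>(h1, h2)\<leftarrow>D h. act h1 (m (act (S h2) z) e))"
proof -
  have add_left: "m (\<Sum>x\<leftarrow>xs. f x) b = (\<Sum>x\<leftarrow>xs. m (f x) b)" for xs f b
    using m by (induction xs) (simp_all add: H_compatible_def, metis add_cancel_left_left)
  have add_right: "m a (\<Sum>x\<leftarrow>xs. f x) = (\<Sum>x\<leftarrow>xs. m a (f x))" for xs f a
    using m by (induction xs) (simp_all add: H_compatible_def, metis add_cancel_left_left)
  define F where "F u v w = m (act (u * S w) z) (act v e)" for u v w
  have "H_trilinear smV F"
    using m by (simp add: H_trilinear_def F_def H_compatible_def distrib_left distrib_right antipode_add
        antipode_smult smult_mult_left smult_mult_right act_add_left act_smult_left)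
  then have "(\<Sum>(h1, h2)\<leftarrow>D h. \<Sum>(u, v)\<leftarrow>D h1. F u v h2) = (\<Sum>(h1, h2)\<leftarrow>D h. \<Sum>(u, v)\<leftarrow>D h1. F u h2 v)"
    by (rule sum_coprod3_swap23[OF module_V])
  moreover have "(\<Sum>(h1, h2)\<leftarrow>D h. act h1 (m (act (S h2) z) e)) = (\<Sum>(h1, h2)\<leftarrow>D h. \<Sum>(u, v)\<leftarrow>D h1. F u v h2)"
    using m by (simp add: F_def H_compatible_def act_mult case_prod_unfold)
  moreover have "(\<Sum>(u, v)\<leftarrow>D h1. F u h2 v) = smV (eps h1) (m z (act h2 e))" for h1 h2
  proof -
    have "(\<Sum>(u, v)\<leftarrow>D h1. F u h2 v) = m (act (\<Sum>(u, v)\<leftarrow>D h1. u * S v) z) (act h2 e)"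
      by (simp add: F_def act_sum_list_left add_left case_prod_unfold)
    then show ?thesis
      using m by (simp add: antipode_right act_smult_left act_one H_compatible_def)
  qed
  moreover have "(\<Sum>(h1, h2)\<leftarrow>D h. smV (eps h1) (m z (act h2 e))) = m z (act h e)"
    using m arg_cong[OF counit_left[of h], of "\<lambda>x. m z (act x e)"]
    by (simp add: act_sum_list_left add_right act_smult_left H_compatible_def case_prod_unfold)
  ultimately show ?thesis
    by simp
qed

end

lemma mset_concat_swap:
  "mset (concat (map (\<lambda>i. concat (map (f i) B)) A)) = mset (concat (map (\<lambda>j. concat (map (\<lambda>i. f i j) A)) B))"
  by (simp add: mset_concat o_def sum_list_swap[of "\<lambda>i j. mset (f i j)"])

context H_supermodule
begin

lemma teqV_swap_pairs:
  "concat (map (\<lambda>(a1, a2). concat (map (\<lambda>(c, d). G a1 a2 c d) B)) A)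
   \<approx> concat (map (\<lambda>(c, d). concat (map (\<lambda>(a1, a2). G a1 a2 c d) A)) B)"
  by (rule teqV_mset) (unfold case_prod_unfold, rule mset_concat_swap)

lemma teqV_interleave:
  assumes "\<And>p. p \<in> set L \<Longrightarrow> [F p] \<approx> [A p, B p]"
  shows "map F L \<approx> map A L @ map B L"
proof -
  have "map F L = concat (map (\<lambda>p. [F p]) L)"
    by (induction L) auto
  also have "\<dots> \<approx> concat (map (\<lambda>p. [A p, B p]) L)"
    by (rule teqV_concat) (rule assms)
  also have "\<dots> \<approx> map A L @ map B L"
    by (rule teqV_mset) (induction L, auto)
  finally show ?thesis .
qed

definition lmul_term :: "('v \<Rightarrow> 'v \<Rightarrow> 'v) \<Rightarrow> 'v \<Rightarrow> 'h \<Rightarrow> 'v \<Rightarrow> 'h \<Rightarrow> 'h \<Rightarrow> ('h list \<times> 'v) list" where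
  "lmul_term m z f d x y = [([x, f], m (act (S y) z) d)]"

lemma lmul_single:
  "lmul D S act m z [([f0, f1], d)] = concat (map (tapp2 (lmul_term m z f1 d)) (pl (D f0)))"
  by (simp add: lmul_def lmul_term_def tapp2_def pl_def case_prod_unfold o_def)

lemma teqV_bilinear_lmul_term:
  assumes m: "H_compatible m"
  shows "teqV_bilinear (lmul_term m z f d)"
  unfolding teqV_bilinear_def lmul_term_def
  using m teqV_add_fst teqV_smult_fst teqV_Vadd
  by (simp add: H_compatible_def antipode_add antipode_smult act_add_left act_smult_left scT_def)

lemma lmul_balanced_inner:
  assumes m: "H_compatible m"
  shows "concat (map (\<lambda>(h1, h2). concat (map (\<lambda>(c, d). [([a * c, f * h2], m (act (S d) z) e)]) (D h1))) (D h))
    \<approx> [([a, f], m z (act h e))]"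
proof -
  define F where "F c d w = [([a * c, f * w], m (act (S d) z) e)]" for c d w
  have "teqV_trilinear F"
    unfolding teqV_trilinear_def F_def
    using m teqV_add_fst teqV_add_snd teqV_smult_fst teqV_smult_snd teqV_Vadd
    by (simp add: H_compatible_def distrib_left antipode_add antipode_smult act_add_left act_smult_left
        smult_mult_right scT_def)
  then have "concat (map (\<lambda>(h1, h2). concat (map (\<lambda>(c, d). F c d h2) (D h1))) (D h))
      \<approx> concat (map (\<lambda>(h1, h2). concat (map (\<lambda>(c, d). F c h2 d) (D h1))) (D h))"
    by (rule concat_coprod3_swap23)
  also have "\<dots> \<approx> concat (map (\<lambda>(h1, h2). [([a, f], act h1 (m (act (S h2) z) e))]) (D h))"
  proof (rule teqV_concat, clarify)
    fix h1 h2
    have "concat (map (\<lambda>(c, d). F c h2 d) (D h1))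
        = map (\<lambda>hs. (map2 (*) [a, f] hs, m (act (S h2) z) e)) (coprod_iter D (length [a, f]) h1)"
      by (simp add: F_def coprod_iter_2[simplified numeral_2_eq_2] pl_def case_prod_unfold o_def)
    also have "\<dots> \<approx> [([a, f], act h1 (m (act (S h2) z) e))]"
      by (rule teqV_balanced) simp
    finally show "concat (map (\<lambda>(c, d). F c h2 d) (D h1)) \<approx> [([a, f], act h1 (m (act (S h2) z) e))]" .
  qed
  also have "\<dots> = map (\<lambda>p. ([a, f], act (fst p) (m (act (S (snd p)) z) e))) (D h)"
    by (induction "D h") (auto simp: case_prod_unfold)
  also have "\<dots> \<approx> [([a, f], \<Sum>p\<leftarrow>D h. act (fst p) (m (act (S (snd p)) z) e))]"
    by (rule teqV_sum_list)
  also have "\<dots> = [([a, f], m z (act h e))]"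
    by (simp add: H_compatible_act_antipode[OF m] case_prod_unfold)
  finally show ?thesis
    by (simp add: F_def)
qed

lemma lmul_balanced:
  assumes m: "H_compatible m"
  shows "concat (map (\<lambda>(h1, h2). lmul D S act m z [([f0 * h1, f1 * h2], e)]) (D h))
    \<approx> lmul D S act m z [([f0, f1], act h e)]"
proof -
  have "concat (map (\<lambda>(h1, h2). lmul D S act m z [([f0 * h1, f1 * h2], e)]) (D h))
      = concat (map (\<lambda>(h1, h2). concat (map (tapp2 (lmul_term m z (f1 * h2) e)) (pl (D (f0 * h1))))) (D h))"
    by (simp only: lmul_single)
  also have "\<dots> \<approx> concat (map (\<lambda>(h1, h2). concat (map (tapp2 (lmul_term m z (f1 * h2) e))
      [[a * c, b * d]. (a, b) \<leftarrow> D f0, (c, d) \<leftarrow> D h1])) (D h))"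
    by (rule teqV_concat, clarify, rule concat_tapp2_teqH_cong[OF teqV_bilinear_lmul_term[OF m] coprod_mult])
  also have "\<dots> = concat (map (\<lambda>(h1, h2). concat (map (\<lambda>(a, b). concat (map (\<lambda>(c, d).
      [([a * c, f1 * h2], m (act (S d) (act (S b) z)) e)]) (D h1))) (D f0))) (D h))"
    by (simp add: concat_map_concat tapp2_def lmul_term_def case_prod_unfold o_def antipode_mult act_mult)
  also have "\<dots> \<approx> concat (map (\<lambda>(a, b). concat (map (\<lambda>(h1, h2). concat (map (\<lambda>(c, d).
      [([a * c, f1 * h2], m (act (S d) (act (S b) z)) e)]) (D h1))) (D h))) (D f0))"
    by (rule teqV_swap_pairs)
  also have "\<dots> \<approx> concat (map (\<lambda>(a, b). [([a, f1], m (act (S b) z) (act h e))]) (D f0))"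
    by (rule teqV_concat, clarify, rule lmul_balanced_inner[OF m])
  also have "\<dots> = lmul D S act m z [([f0, f1], act h e)]"
    by (simp add: lmul_def case_prod_unfold)
  finally show ?thesis .
qed

text \<open>Basic tensors whose \<open>H\<close>-part does not have length 2 are sent to \<open>0\<close>; this keeps the
  relations of every \<open>H\<^sup>\<otimes>\<^sup>r \<otimes>\<^sub>H V\<close> satisfied.\<close>
definition lmul1 :: "('v \<Rightarrow> 'v \<Rightarrow> 'v) \<Rightarrow> 'v \<Rightarrow> 'h list \<times> 'v \<Rightarrow> ('h list \<times> 'v) list" where
  "lmul1 m z t = (if length (fst t) = 2 then lmul D S act m z [t] else [])"

lemma concat_lmul1: "deg2 X \<Longrightarrow> concat (map (lmul1 m z) X) = lmul D S act m z X"
  by (induction X) (auto simp: deg2_def lmul1_def lmul_def)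

lemma lmul1_Hadd:
  assumes m: "H_compatible m"
  shows "lmul1 m z (xs @ [a + b] @ ys, e) \<approx> lmul1 m z (xs @ [a] @ ys, e) @ lmul1 m z (xs @ [b] @ ys, e)"
proof (cases "length (xs @ [a] @ ys) = 2")
  case True
  then show ?thesis
  proof (cases rule: length2_split)
    case (1 f)
    have "lmul1 m z (xs @ [a + b] @ ys, e) = concat (map (tapp2 (lmul_term m z f e)) (pl (D (a + b))))"
      by (simp add: 1 lmul1_def lmul_single)
    also have "\<dots> \<approx> concat (map (tapp2 (lmul_term m z f e)) (pl (D a @ D b)))"
      by (rule concat_tapp2_teqH_cong[OF teqV_bilinear_lmul_term[OF m] coprod_add])
    also have "\<dots> = lmul1 m z (xs @ [a] @ ys, e) @ lmul1 m z (xs @ [b] @ ys, e)"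
      by (simp add: 1 lmul1_def lmul_single pl_def)
    finally show ?thesis .
  next
    case (2 f)
    let ?t = "\<lambda>x p. ([fst p, x], m (act (S (snd p)) z) e)"
    have "lmul1 m z (xs @ [a + b] @ ys, e) = map (?t (a + b)) (D f)"
      by (simp add: 2 lmul1_def lmul_def case_prod_unfold)
    also have "\<dots> \<approx> map (?t a) (D f) @ map (?t b) (D f)"
      by (rule teqV_interleave) (rule teqV_add_snd)
    also have "\<dots> = lmul1 m z (xs @ [a] @ ys, e) @ lmul1 m z (xs @ [b] @ ys, e)"
      by (simp add: 2 lmul1_def lmul_def case_prod_unfold)
    finally show ?thesis .
  qed
qed (simp add: lmul1_def)

lemma lmul1_Hsmult:
  assumes m: "H_compatible m"
  shows "lmul1 m z (xs @ [smH c a] @ ys, e) \<approx> scT smV c (lmul1 m z (xs @ [a] @ ys, e))"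
proof (cases "length (xs @ [a] @ ys) = 2")
  case True
  then show ?thesis
  proof (cases rule: length2_split)
    case (1 f)
    have "lmul1 m z (xs @ [smH c a] @ ys, e) = concat (map (tapp2 (lmul_term m z f e)) (pl (D (smH c a))))"
      by (simp add: 1 lmul1_def lmul_single)
    also have "\<dots> \<approx> concat (map (tapp2 (lmul_term m z f e)) (pl (map (\<lambda>(a, b). (smH c a, b)) (D a))))"
      by (rule concat_tapp2_teqH_cong[OF teqV_bilinear_lmul_term[OF m] coprod_smult])
    also have "\<dots> = concat (map (\<lambda>p. [([smH c (fst p), f], m (act (S (snd p)) z) e)]) (D a))"
      by (simp add: pl_def tapp2_def lmul_term_def case_prod_unfold o_def)
    also have "\<dots> \<approx> concat (map (\<lambda>p. [([fst p, f], smV c (m (act (S (snd p)) z) e))]) (D a))"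
      by (rule teqV_concat) (rule teqV_smult_fst)
    also have "\<dots> = scT smV c (lmul1 m z (xs @ [a] @ ys, e))"
      by (simp add: 1 lmul1_def lmul_def scT_def case_prod_unfold o_def)
    finally show ?thesis .
  next
    case (2 f)
    have "lmul1 m z (xs @ [smH c a] @ ys, e) = concat (map (\<lambda>p. [([fst p, smH c a], m (act (S (snd p)) z) e)]) (D f))"
      by (simp add: 2 lmul1_def lmul_def case_prod_unfold)
    also have "\<dots> \<approx> concat (map (\<lambda>p. [([fst p, a], smV c (m (act (S (snd p)) z) e))]) (D f))"
      by (rule teqV_concat) (rule teqV_smult_snd)
    also have "\<dots> = scT smV c (lmul1 m z (xs @ [a] @ ys, e))"
      by (simp add: 2 lmul1_def lmul_def scT_def case_prod_unfold o_def)
    finally show ?thesis .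
  qed
qed (simp add: lmul1_def scT_def)

lemma lmul1_Vadd:
  assumes m: "H_compatible m"
  shows "lmul1 m z (fs, e + e') \<approx> lmul1 m z (fs, e) @ lmul1 m z (fs, e')"
proof (cases "length fs = 2")
  case True
  let ?t = "\<lambda>d p. ([fst p, fs ! 1], m (act (S (snd p)) z) d)"
  have "lmul1 m z (fs, e + e') = map (?t (e + e')) (D (fs ! 0))"
    by (simp add: True lmul1_def lmul_def case_prod_unfold)
  also have "\<dots> \<approx> map (?t e) (D (fs ! 0)) @ map (?t e') (D (fs ! 0))"
    using m by (intro teqV_interleave) (simp add: H_compatible_def teqV_Vadd)
  also have "\<dots> = lmul1 m z (fs, e) @ lmul1 m z (fs, e')"
    by (simp add: True lmul1_def lmul_def case_prod_unfold)
  finally show ?thesis .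
qed (simp add: lmul1_def)

lemma lmul1_Vsmult:
  assumes m: "H_compatible m"
  shows "lmul1 m z (fs, smV c e) \<approx> scT smV c (lmul1 m z (fs, e))"
  using m by (simp add: lmul1_def lmul_def scT_def H_compatible_def case_prod_unfold o_def)

lemma lmul1_balanced:
  assumes m: "H_compatible m" and "fs \<noteq> []"
  shows "concat (map (\<lambda>hs. lmul1 m z (map2 (*) fs hs, e)) (coprod_iter D (length fs) h)) \<approx> lmul1 m z (fs, act h e)"
proof (cases "length fs = 2")
  case True
  then obtain f0 f1 where fs: "fs = [f0, f1]"
    by (auto simp: length2_conv)
  show ?thesis
    using lmul_balanced[OF m, of z f0 f1 e h]
    by (simp add: fs lmul1_def coprod_iter_2[simplified numeral_2_eq_2] pl_def case_prod_unfold o_def)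
next
  case False
  obtain k where k: "length fs = Suc k"
    using \<open>fs \<noteq> []\<close> by (cases fs) auto
  then have "concat (map (\<lambda>hs. lmul1 m z (map2 (*) fs hs, e)) (coprod_iter D (length fs) h)) = []"
    using length_coprod_iter[of _ D k h] False by (simp add: lmul1_def)
  moreover have "lmul1 m z (fs, act h e) = []"
    using False by (simp add: lmul1_def)
  ultimately show ?thesis
    by (simp only: teqV_refl)
qed

lemma lmul_scT: "H_compatible m \<Longrightarrow> lmul D S act m z (scT smV k X) = scT smV k (lmul D S act m z X)"
  by (induction X) (auto simp: lmul_def scT_def H_compatible_def case_prod_unfold)

lemma lmul_teqV_cong:
  assumes m: "H_compatible m" and XY: "X \<approx> Y" and "deg2 X" "deg2 Y"
  shows "lmul D S act m z X \<approx> lmul D S act m z Y"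
  using teqV_concat_cong[of "lmul1 m z", OF lmul1_Hadd[OF m] lmul1_Hsmult[OF m] lmul1_Vadd[OF m]
      lmul1_Vsmult[OF m] lmul1_balanced[OF m] XY] assms(3,4)
  by (simp add: concat_lmul1)

end

section \<open>The flip and scalar multiplication on \<open>(H \<otimes> H) \<otimes>\<^sub>H V\<close>\<close>

abbreviation flip :: "('a list \<times> 'b) list \<Rightarrow> ('a list \<times> 'b) list" where
  "flip X \<equiv> map (\<lambda>(fs, e). (rev fs, e)) X"

definition flip1 :: "'a list \<times> 'b \<Rightarrow> ('a list \<times> 'b) list" where
  "flip1 t = (if length (fst t) = 2 then [(rev (fst t), snd t)] else [])"

lemma concat_flip1: "deg2 X \<Longrightarrow> concat (map flip1 X) = flip X"
  by (induction X) (auto simp: deg2_def flip1_def)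

lemma scT_append [simp]: "scT smV c (X @ Y) = scT smV c X @ scT smV c Y"
  by (simp add: scT_def)

lemma flip_scT: "flip (scT smV c X) = scT smV c (flip X)"
  by (induction X) (auto simp: scT_def)

lemma deg2_append [simp]: "deg2 (X @ Y) \<longleftrightarrow> deg2 X \<and> deg2 Y"
  by (auto simp: deg2_def)

lemma deg2_flip [simp]: "deg2 (flip X) \<longleftrightarrow> deg2 X"
  by (auto simp: deg2_def)

lemma deg2_scT [simp]: "deg2 (scT smV c X) \<longleftrightarrow> deg2 X"
  by (auto simp: deg2_def scT_def)

lemma deg2_rmul: "deg2 (rmul D S act m X c)"
  by (auto simp: deg2_def rmul_def)

lemma flip_rmul: "deg2 X \<Longrightarrow> flip (rmul D S act m X c) = lmul D S act (\<lambda>u d. m d u) c (flip X)"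
  by (induction X) (auto simp: deg2_def rmul_def lmul_def length2_conv)

context H_supermodule
begin

lemma scT_teqV_cong:
  assumes "X \<approx> Y"
  shows "scT smV c X \<approx> scT smV c Y"
proof -
  have "fscale c (fvec X - fvec Y) \<in> span_relV"
    using assms module.span_scale[OF module_fscale] by (simp add: teqV_def)
  then have "(fscale c (fvec X - fvec Y) - (fscale c (fvec X) - fvec (scT smV c X)))
      + (fscale c (fvec Y) - fvec (scT smV c Y)) \<in> span_relV"
    by (intro module.span_add[OF module_fscale] module.span_diff[OF module_fscale] fscale_fvec_scT)
  moreover have "fscale c (fvec X - fvec Y) = fscale c (fvec X) - fscale c (fvec Y)"
    by (simp add: fscale_def fun_eq_iff algebra_simps)
  ultimately show ?thesis
    by (simp add: teqV_def algebra_simps)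
qed

lemma flip1_balanced:
  assumes "fs \<noteq> []"
  shows "concat (map (\<lambda>hs. flip1 (map2 (*) fs hs, e)) (coprod_iter D (length fs) h)) \<approx> flip1 (fs, act h e)"
proof (cases "length fs = 2")
  case True
  then obtain f0 f1 where fs: "fs = [f0, f1]"
    by (auto simp: length2_conv)
  define F where "F x y = [([f1 * y, f0 * x], e)]" for x y
  have F: "teqV_bilinear F"
    unfolding teqV_bilinear_def F_def
    by (simp add: distrib_left smult_mult_right teqV_add_fst teqV_add_snd teqV_smult_fst teqV_smult_snd scT_def)
  have "concat (map (\<lambda>hs. flip1 (map2 (*) fs hs, e)) (coprod_iter D (length fs) h))
      = concat (map (\<lambda>(a, b). F a b) (D h))"
    by (simp add: fs coprod_iter_2[simplified numeral_2_eq_2] flip1_def F_def pl_def case_prod_unfold o_def)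
  also have "\<dots> \<approx> concat (map (\<lambda>(a, b). F b a) (D h))"
    by (rule concat_coprod_swap[OF F])
  also have "\<dots> = map (\<lambda>hs. (map2 (*) [f1, f0] hs, e)) (coprod_iter D (length [f1, f0]) h)"
    by (simp add: coprod_iter_2[simplified numeral_2_eq_2] F_def pl_def case_prod_unfold o_def)
  also have "\<dots> \<approx> [([f1, f0], act h e)]"
    by (rule teqV_balanced) simp
  also have "\<dots> = flip1 (fs, act h e)"
    by (simp add: fs flip1_def)
  finally show ?thesis .
next
  case False
  obtain k where k: "length fs = Suc k"
    using assms by (cases fs) auto
  then have "concat (map (\<lambda>hs. flip1 (map2 (*) fs hs, e)) (coprod_iter D (length fs) h)) = []"
    using length_coprod_iter[of _ D k h] False by (simp add: flip1_def)
  moreover have "flip1 (fs, act h e) = []"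
    using False by (simp add: flip1_def)
  ultimately show ?thesis
    by (simp only: teqV_refl)
qed

lemma flip_teqV_cong:
  assumes XY: "X \<approx> Y" and "deg2 X" "deg2 Y"
  shows "flip X \<approx> flip Y"
proof -
  have "concat (map flip1 X) \<approx> concat (map flip1 Y)"
  proof (rule teqV_concat_cong[OF _ _ _ _ flip1_balanced XY])
    fix xs a b ys e
    show "flip1 (xs @ [a + b] @ ys, e) \<approx> flip1 (xs @ [a] @ ys, e) @ flip1 (xs @ [b] @ ys, e)"
    proof (cases "length (xs @ [a] @ ys) = 2")
      case True
      then show ?thesis
        by (cases rule: length2_split) (simp_all add: flip1_def teqV_add_fst teqV_add_snd)
    qed (simp add: flip1_def)
  next
    fix xs c a ys e
    show "flip1 (xs @ [smH c a] @ ys, e) \<approx> scT smV c (flip1 (xs @ [a] @ ys, e))"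
    proof (cases "length (xs @ [a] @ ys) = 2")
      case True
      then show ?thesis
        by (cases rule: length2_split) (simp_all add: flip1_def scT_def teqV_smult_fst teqV_smult_snd)
    qed (simp add: flip1_def scT_def)
  next
    fix fs e e'
    show "flip1 (fs, e + e') \<approx> flip1 (fs, e) @ flip1 (fs, e')"
      by (simp add: flip1_def teqV_Vadd)
  next
    fix fs c e
    show "flip1 (fs, smV c e) \<approx> scT smV c (flip1 (fs, e))"
      by (simp add: flip1_def scT_def)
  qed
  with assms(2,3) show ?thesis
    by (simp add: concat_flip1)
qed

end

locale poisson_pseudoalgebra = H_supermodule smH D eps S smV V0 V1 act
  for smH :: "'f::field_char_0 \<Rightarrow> 'h::ring_1 \<Rightarrow> 'h" and D eps S
    and smV :: "'f \<Rightarrow> 'v::ab_group_add \<Rightarrow> 'v" and V0 V1 act +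
  fixes br :: "'v \<Rightarrow> 'v \<Rightarrow> ('h list \<times> 'v) list" and mul :: "'v \<Rightarrow> 'v \<Rightarrow> 'v"
  assumes poisson: "poisson_pseudo smH D eps S smV V0 V1 act br mul"
begin

lemma deg2_br [rule_format]: "\<forall>a b. deg2 (br a b)"
  using poisson unfolding poisson_pseudo_def lie_pseudo_def deg2_def by (elim conjE) assumption

lemma br_even [rule_format]:
  "\<forall>a b pa pb. a \<in> Vp V0 V1 pa \<longrightarrow> b \<in> Vp V0 V1 pb \<longrightarrow>
    (\<exists>Y. br a b \<approx> Y \<and> (\<forall>(fs, e)\<in>set Y. length fs = 2 \<and> e \<in> Vp V0 V1 (pa \<noteq> pb)))"
  using poisson unfolding poisson_pseudo_def lie_pseudo_def by (elim conjE) assumption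

lemma br_skew [rule_format]:
  "\<forall>a b pa pb. a \<in> Vp V0 V1 pa \<longrightarrow> b \<in> Vp V0 V1 pb \<longrightarrow>
    br b a \<approx> scT smV (- sgn_pp pa pb) (flip (br a b))"
  using poisson unfolding poisson_pseudo_def lie_pseudo_def by (elim conjE) assumption

lemma left_leibniz [rule_format]:
  "\<forall>a b c pa pb pc. a \<in> Vp V0 V1 pa \<longrightarrow> b \<in> Vp V0 V1 pb \<longrightarrow> c \<in> Vp V0 V1 pc \<longrightarrow>
    br a (mul b c) \<approx> rmul D S act mul (br a b) c @ scT smV (sgn_pp pb pc) (rmul D S act mul (br a c) b)"
  using poisson unfolding poisson_pseudo_def by (elim conjE) assumption

lemma mul_even_supercomm [rule_format]:
  "\<forall>a b pa pb. a \<in> Vp V0 V1 pa \<longrightarrow> b \<in> Vp V0 V1 pb \<longrightarrow>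
    mul a b \<in> Vp V0 V1 (pa \<noteq> pb) \<and> mul a b = smV (sgn_pp pa pb) (mul b a)"
  using poisson unfolding poisson_pseudo_def by (elim conjE) assumption

lemma H_compatible_mul: "H_compatible mul"
  using poisson unfolding poisson_pseudo_def H_compatible_def by (elim conjE) (intro conjI; assumption)

lemma lmul_flip_mul:
  assumes "\<forall>(fs, e)\<in>set Y. e \<in> Vp V0 V1 p" and b: "b \<in> Vp V0 V1 pb"
  shows "lmul D S act (\<lambda>u d. mul d u) b Y = scT smV (sgn_pp p pb) (lmul D S act mul b Y)"
  using assms(1)
proof (induction Y)
  case Nil
  then show ?case by (simp add: lmul_def scT_def)
next
  case (Cons t Y)
  obtain fs e where t: "t = (fs, e)" by (cases t)
  have "mul e (act (S y) b) = smV (sgn_pp p pb) (mul (act (S y) b) e)" for y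
    using Cons.prems t mul_even_supercomm[OF _ act_parity[OF b]] by auto
  with Cons show ?case
    by (simp add: t lmul_def scT_def case_prod_unfold o_def)
qed

text \<open>Skew-symmetry turns \<open>[c*a]b\<close> into \<open>b[a*c]\<close>, up to the sign coming from
  moving \<open>b\<close> across \<open>[c*a]\<close>.\<close>
lemma flip_rmul_br:
  assumes a: "a \<in> Vp V0 V1 pa" and b: "b \<in> Vp V0 V1 pb" and c: "c \<in> Vp V0 V1 pc"
  shows "flip (rmul D S act mul (br c a) b)
    \<approx> scT smV (sgn_pp (pc \<noteq> pa) pb * - sgn_pp pc pa) (lmul D S act mul b (br a c))"
proof -
  obtain Y where Y: "br c a \<approx> Y" and Y2: "\<forall>(fs, e)\<in>set Y. length fs = 2 \<and> e \<in> Vp V0 V1 (pc \<noteq> pa)"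
    using br_even[OF c a] by blast
  have "deg2 Y"
    using Y2 by (auto simp: deg2_def)
  have flipY: "flip (br c a) \<approx> flip Y"
    by (rule flip_teqV_cong[OF Y deg2_br \<open>deg2 Y\<close>])
  have parY: "\<forall>(fs, e)\<in>set (flip Y). e \<in> Vp V0 V1 (pc \<noteq> pa)"
    using Y2 by auto
  let ?s = "sgn_pp (pc \<noteq> pa) pb :: 'f" and ?k = "- sgn_pp pc pa :: 'f"
  let ?L = "lmul D S act mul b (flip Y)"
  have "flip (rmul D S act mul (br c a) b) = lmul D S act (\<lambda>u d. mul d u) b (flip (br c a))"
    by (rule flip_rmul[OF deg2_br])
  also have "\<dots> \<approx> lmul D S act (\<lambda>u d. mul d u) b (flip Y)"
    by (rule lmul_teqV_cong[OF H_compatible_flip[OF H_compatible_mul] flipY]) (simp_all add: deg2_br \<open>deg2 Y\<close>)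
  also have "\<dots> = scT smV ?s ?L"
    by (rule lmul_flip_mul[OF parY b])
  finally have rmul_eq: "flip (rmul D S act mul (br c a) b) \<approx> scT smV ?s ?L" .
  have "lmul D S act mul b (br a c) \<approx> lmul D S act mul b (scT smV ?k (flip (br c a)))"
    by (rule lmul_teqV_cong[OF H_compatible_mul br_skew[OF c a]]) (simp_all add: deg2_br)
  also have "\<dots> \<approx> lmul D S act mul b (scT smV ?k (flip Y))"
    by (rule lmul_teqV_cong[OF H_compatible_mul scT_teqV_cong[OF flipY]]) (simp_all add: deg2_br \<open>deg2 Y\<close>)
  also have "\<dots> = scT smV ?k ?L"
    by (rule lmul_scT[OF H_compatible_mul])
  finally have "scT smV ?k (lmul D S act mul b (br a c)) \<approx> scT smV ?k (scT smV ?k ?L)"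
    by (rule scT_teqV_cong)
  also have "scT smV ?k (scT smV ?k ?L) = ?L"
    by (simp add: scT_scT scT_one sgn_pp_def)
  finally have "scT smV ?s ?L \<approx> scT smV ?s (scT smV ?k (lmul D S act mul b (br a c)))"
    by (rule scT_teqV_cong[OF teqV_sym])
  with rmul_eq show ?thesis
    by (metis teqV_trans scT_scT)
qed

theorem right_leibniz:
  assumes a: "a \<in> Vp V0 V1 pa" and b: "b \<in> Vp V0 V1 pb" and c: "c \<in> Vp V0 V1 pc"
  shows "br (mul a b) c \<approx> lmul D S act mul a (br b c) @ scT smV (sgn_pp pa pb) (lmul D S act mul b (br a c))"
proof -
  let ?k = "- sgn_pp pc (pa \<noteq> pb) :: 'f" and ?s = "sgn_pp pa pb :: 'f"
  let ?A = "rmul D S act mul (br c a) b" and ?B = "rmul D S act mul (br c b) a"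
  have "br (mul a b) c \<approx> scT smV ?k (flip (br c (mul a b)))"
    using mul_even_supercomm[OF a b] by (intro br_skew c) blast
  also have "\<dots> \<approx> scT smV ?k (flip (?A @ scT smV ?s ?B))"
    by (intro scT_teqV_cong flip_teqV_cong left_leibniz[OF c a b]) (simp_all add: deg2_br deg2_rmul)
  also have "\<dots> = scT smV ?k (flip ?A) @ scT smV (?k * ?s) (flip ?B)"
    by (simp add: flip_scT scT_scT)
  also have "\<dots> \<approx> scT smV ?k (scT smV (sgn_pp (pc \<noteq> pa) pb * - sgn_pp pc pa) (lmul D S act mul b (br a c)))
      @ scT smV (?k * ?s) (scT smV (sgn_pp (pc \<noteq> pb) pa * - sgn_pp pc pb) (lmul D S act mul a (br b c)))"
    by (intro teqV_append scT_teqV_cong flip_rmul_br a b c)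
  also have "\<dots> = scT smV ?s (lmul D S act mul b (br a c)) @ lmul D S act mul a (br b c)"
    by (cases pa; cases pb; cases pc) (simp_all add: scT_scT scT_one sgn_pp_def)
  also have "\<dots> \<approx> lmul D S act mul a (br b c) @ scT smV ?s (lmul D S act mul b (br a c))"
    by (rule teqV_mset) simp
  finally show ?thesis .
qed

end

lemma poisson_pseudoalgebra_if_poisson_pseudo:
  assumes "poisson_pseudo smH D eps S smV V0 V1 act br mul"
  shows "poisson_pseudoalgebra smH D eps S smV V0 V1 act br mul"
proof unfold_locales
  have "lie_pseudo smH D eps S smV V0 V1 act br"
    using assms unfolding poisson_pseudo_def by (elim conjE)
  then have "cocomm_hopf smH D eps S \<and> superspace smV V0 V1 \<and> Hmodule smH smV V0 V1 act"
    unfolding lie_pseudo_def by (elim conjE) (intro conjI; assumption)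
  then show "cocomm_hopf smH D eps S" "superspace smV V0 V1" "Hmodule smH smV V0 V1 act"
    by simp_all
qed (rule assms)

theorem lemma4p7:
  fixes smH :: "'f::field_char_0 \<Rightarrow> 'h::ring_1 \<Rightarrow> 'h"
    and D :: "'h \<Rightarrow> ('h \<times> 'h) list" and eps :: "'h \<Rightarrow> 'f" and S :: "'h \<Rightarrow> 'h"
    and smV :: "'f \<Rightarrow> 'v::ab_group_add \<Rightarrow> 'v" and V0 V1 :: "'v set"
    and act :: "'h \<Rightarrow> 'v \<Rightarrow> 'v" and br :: "'v \<Rightarrow> 'v \<Rightarrow> ('h list \<times> 'v) list"
    and mul :: "'v \<Rightarrow> 'v \<Rightarrow> 'v"
  assumes "poisson_pseudo smH D eps S smV V0 V1 act br mul"
    and "a \<in> Vp V0 V1 pa" and "b \<in> Vp V0 V1 pb" and "c \<in> Vp V0 V1 pc"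
  shows "teqV smH smV D act (br (mul a b) c)
           (lmul D S act mul a (br b c) @ scT smV (sgn_pp pa pb) (lmul D S act mul b (br a c)))"
  using poisson_pseudoalgebra.right_leibniz[OF poisson_pseudoalgebra_if_poisson_pseudo[OF assms(1)] assms(2-4)] .

end
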